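(* Let $g(n,k)$ be the number of $k$-faces of $I(\mathfrak{gl}_n,V\oplus\bigwedge^2)$. Then for $n,k\ge 0$ \[ g(n,k)=\sum_{i=0}^k(-1)^{k-i}2^i\binom{k}{i}\binom{n+i}{2k}, \] and for $0\le k\le n$ \[ g(n,n-k)=\sum_{i=0}^{\min\{k,\lfloor (n+1)/2\rfloor\}}(-1)^i2^{n-2i}\binom{n-i}{k-i}\left(\binom{n-i+1}{i}+\binom{n-i}{i-1}\right), \] with the convention $\binom{a}{b}=0$ if $b<0$ or $b>a$.
   Context: Identify the diagonal Cartan subalgebra of $\mathfrak{gl}_n$ with $\mathbb{R}^n$ with coordinates $x_1,\dots,x_n$. Let $W=\{x_1\ge\cdots\ge x_n\}$ and $W^0=\{x_1>\cdots>x_n\}$. For $1\le i\le j\le n$ let $\lambda_{i,j}^\perp$ be the hyperplane $x_i+x_j=0$ (for $i=j$: $x_i=0$). The arrangement $I(\mathfrak{gl}_n,V\oplus\bigwedge^2)$ consists of these hyperplanes restricted to $W$. Its chambers are the closures of the connected components of $W^0\setminus\bigcup\lambda_{i,j}^\perp$; a face is a chamber or the intersection of a chamber with a supporting hyperplane; a $k$-face is a face whose linear span has dimension $k$. *)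

theory Defs
  imports "HOL-Analysis.Analysis" "HOL-Library.Function_Algebras"
begin

text \<open>Points of R^n are modelled as functions nat => real vanishing outside {0..<n};
  coordinate x_(i+1) of the paper is x i here. nat => real carries the product
  topology (which on this closed subspace is the Euclidean topology) and the
  pointwise vector-space structure.\<close>

definition Rn :: "nat \<Rightarrow> (nat \<Rightarrow> real) set" where
  "Rn n = {x. \<forall>i\<ge>n. x i = 0}"

definition scaleF :: "real \<Rightarrow> (nat \<Rightarrow> real) \<Rightarrow> (nat \<Rightarrow> real)" where
  "scaleF c x = (\<lambda>i. c * x i)"

definition Wc :: "nat \<Rightarrow> (nat \<Rightarrow> real) set" where
  "Wc n = {x \<in> Rn n. \<forall>i j. i \<le> j \<and> j < n \<longrightarrow> x j \<le> x i}"

definition W0 :: "nat \<Rightarrow> (nat \<Rightarrow> real) set" where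
  "W0 n = {x \<in> Rn n. \<forall>i j. i < j \<and> j < n \<longrightarrow> x j < x i}"

definition lam_perp :: "nat \<Rightarrow> nat \<Rightarrow> nat \<Rightarrow> (nat \<Rightarrow> real) set" where
  "lam_perp n i j = {x \<in> Rn n. (if i = j then x i = 0 else x i + x j = 0)}"

definition arr_complement :: "nat \<Rightarrow> (nat \<Rightarrow> real) set" where
  "arr_complement n = W0 n - (\<Union>{lam_perp n i j | i j. i \<le> j \<and> j < n})"

definition chambers :: "nat \<Rightarrow> (nat \<Rightarrow> real) set set" where
  "chambers n = {closure (connected_component_set (arr_complement n) x) | x. x \<in> arr_complement n}"

definition supporting_hyperplane :: "nat \<Rightarrow> (nat \<Rightarrow> real) set \<Rightarrow> (nat \<Rightarrow> real) set \<Rightarrow> bool" where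
  "supporting_hyperplane n C H \<longleftrightarrow>
     (\<exists>a b. (\<exists>i<n. a i \<noteq> 0) \<and>
        H = {x \<in> Rn n. (\<Sum>i<n. a i * x i) = b} \<and>
        C \<subseteq> {x. (\<Sum>i<n. a i * x i) \<le> b} \<and> C \<inter> H \<noteq> {})"

definition faces :: "nat \<Rightarrow> (nat \<Rightarrow> real) set set" where
  "faces n = chambers n \<union> {C \<inter> H | C H. C \<in> chambers n \<and> supporting_hyperplane n C H}"

text \<open>dimension of the linear span (vector_space.dim S is the dimension of span S)\<close>
definition span_dim :: "(nat \<Rightarrow> real) set \<Rightarrow> nat" where
  "span_dim S = vector_space.dim scaleF S"

definition g :: "nat \<Rightarrow> nat \<Rightarrow> nat" where
  "g n k = card {F \<in> faces n. span_dim F = k}"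

definition binom :: "int \<Rightarrow> int \<Rightarrow> int" where
  "binom a b = (if b < 0 \<or> b > a then 0 else int (nat a choose nat b))"

end

theory Submission
  imports Defs "HOL-Library.Multiset"
begin

text \<open>Every chamber is a simplicial cone: if u is a point of it and its coordinates are ordered by
  absolute value, the chamber is spanned by n rays, and its faces are the subcones spanned by
  subsets of these rays. Each face therefore contains exactly one integral representative: a
  weakly decreasing integer vector whose nonzero absolute values fill an interval {1..m}, and m
  is the dimension of the face. Counting representatives through their multisets of coordinates
  gives c(n, k+1) = \<Sum>j<n. (n-j+1) c(j, k), hence the recurrence
  c(n+2, k+1) = 2 c(n+1, k+1) - c(n, k+1) + 2 c(n+1, k) - c(n, k), which both closed forms
  satisfy with the same initial values.\<close>

section \<open>Sign cones\<close>

lemma sum_fun_apply: "(sum f T) i = sum (\<lambda>t. f t i) T"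
  by (induction T rule: infinite_finite_induct) auto

interpretation VS: vector_space scaleF
  by unfold_locales (auto simp: scaleF_def fun_eq_iff algebra_simps)

definition sign_compat :: "real \<Rightarrow> real \<Rightarrow> bool" where
  "sign_compat a b \<longleftrightarrow> (0 < a \<longrightarrow> 0 \<le> b) \<and> (a < 0 \<longrightarrow> b \<le> 0) \<and> (a = 0 \<longrightarrow> b = 0)"

lemma sign_compat_neg: "sign_compat (-a) (-b) \<longleftrightarrow> sign_compat a b"
  unfolding sign_compat_def by auto

lemma sign_compat_zero [simp]: "sign_compat a 0"
  unfolding sign_compat_def by auto

lemma sign_compat_refl: "sign_compat a a"
  unfolding sign_compat_def by auto

lemma sign_compat_scale:
  "sign_compat a b \<Longrightarrow> 0 \<le> c \<Longrightarrow> sign_compat a (c * b)"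
  unfolding sign_compat_def by (auto simp: mult_nonneg_nonneg mult_nonneg_nonpos)

lemma sign_compat_add:
  "sign_compat a b \<Longrightarrow> sign_compat a b' \<Longrightarrow> sign_compat a (b + b')"
  unfolding sign_compat_def by auto

lemma sign_compat_sum:
  "(\<And>t. t \<in> T \<Longrightarrow> sign_compat a (f t)) \<Longrightarrow> sign_compat a (sum f T)"
  by (induction T rule: infinite_finite_induct) (auto intro: sign_compat_add)

lemma sign_compat_sum_term:
  assumes "finite T" "t \<in> T" "\<And>s. s \<in> T \<Longrightarrow> sign_compat a (b s)" "\<And>s. s \<in> T \<Longrightarrow> 0 \<le> c s" "0 < c t"
  shows "sign_compat (\<Sum>s\<in>T. c s * b s) (b t)"
proof -
  consider "0 < a" | "a < 0" | "a = 0" by linarith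
  then show ?thesis
  proof cases
    case 1
    then have bs: "\<And>s. s \<in> T \<Longrightarrow> 0 \<le> b s" using assms(3) unfolding sign_compat_def by auto
    have nn: "\<And>s. s \<in> T \<Longrightarrow> 0 \<le> c s * b s" using bs assms(4) by auto
    have "(\<Sum>s\<in>T. c s * b s) = 0 \<Longrightarrow> c t * b t = 0"
      using sum_nonneg_eq_0_iff[OF assms(1) nn] assms(2) by auto
    moreover have "0 \<le> (\<Sum>s\<in>T. c s * b s)" using nn by (simp add: sum_nonneg)
    ultimately show ?thesis using bs[OF assms(2)] assms(5) unfolding sign_compat_def by auto
  next
    case 2
    then have bs: "\<And>s. s \<in> T \<Longrightarrow> 0 \<le> - b s" using assms(3) unfolding sign_compat_def by auto
    have nn: "\<And>s. s \<in> T \<Longrightarrow> 0 \<le> c s * - b s" using bs assms(4) by (metis mult_nonneg_nonneg)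
    have "(\<Sum>s\<in>T. c s * - b s) = 0 \<Longrightarrow> c t * - b t = 0"
      using sum_nonneg_eq_0_iff[OF assms(1) nn] assms(2) by auto
    moreover have "(\<Sum>s\<in>T. c s * - b s) = - (\<Sum>s\<in>T. c s * b s)" by (simp add: sum_negf)
    moreover have "0 \<le> (\<Sum>s\<in>T. c s * - b s)" using nn by (simp add: sum_nonneg)
    ultimately show ?thesis using bs[OF assms(2)] assms(5) unfolding sign_compat_def by auto
  next
    case 3
    then have "\<And>s. s \<in> T \<Longrightarrow> b s = 0" using assms(3) unfolding sign_compat_def by auto
    then show ?thesis using assms(2) by simp
  qed
qed

lemma sign_compat_antisym:
  "sign_compat a b \<Longrightarrow> sign_compat b a \<Longrightarrow> sgn a = sgn b"
  unfolding sign_compat_def by (auto simp: sgn_if)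

lemma sign_compat_if_sgn_eq: "sgn b = sgn a \<Longrightarrow> sign_compat a b"
  unfolding sign_compat_def by (auto simp: sgn_if split: if_splits)

lemma sgn_convex_comb:
  fixes a b s t :: real
  assumes "sign_compat a b" "0 \<le> s" "0 < t"
  shows "sgn (s * b + t * a) = sgn a"
proof -
  consider "0 < a" | "a < 0" | "a = 0" by linarith
  then show ?thesis
  proof cases
    case 1
    with assms have "0 \<le> s * b" "0 < t * a" by (simp_all add: sign_compat_def)
    with 1 show ?thesis by (simp add: sgn_if)
  next
    case 2
    with assms have "s * b \<le> 0" "t * a < 0"
      by (simp_all add: sign_compat_def mult_nonneg_nonpos mult_pos_neg)
    with 2 show ?thesis by (simp add: sgn_if)
  next
    case 3
    with assms show ?thesis by (simp add: sign_compat_def)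
  qed
qed

text \<open>For u in the arrangement complement this is the closed chamber containing u
  (lemma chambers_eq); for an integral representative v it is the face represented by v.\<close>

definition sign_cone :: "nat \<Rightarrow> (nat \<Rightarrow> real) \<Rightarrow> (nat \<Rightarrow> real) set" where
  "sign_cone n u = {x \<in> Rn n. \<forall>i<n. \<forall>j<n.
     sign_compat (u i - u j) (x i - x j) \<and> sign_compat (u i + u j) (x i + x j)}"

lemma zero_in_Rn [simp]: "0 \<in> Rn n"
  by (simp add: Rn_def)

lemma zero_in_sign_cone [simp]: "0 \<in> sign_cone n u"
  by (simp add: sign_cone_def)

lemma in_own_sign_cone: "u \<in> Rn n \<Longrightarrow> u \<in> sign_cone n u"
  by (simp add: sign_cone_def sign_compat_refl)

lemma sign_cone_nonneg_comb:
  assumes "\<And>t. t \<in> T \<Longrightarrow> y t \<in> sign_cone n u" "\<And>t. t \<in> T \<Longrightarrow> 0 \<le> c t"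
  shows "(\<lambda>i. \<Sum>t\<in>T. c t * y t i) \<in> sign_cone n u"
proof -
  have "(\<lambda>i. \<Sum>t\<in>T. c t * y t i) \<in> Rn n"
    using assms(1) by (auto simp: Rn_def sign_cone_def)
  moreover have "sign_compat (u i - u j) ((\<Sum>t\<in>T. c t * y t i) - (\<Sum>t\<in>T. c t * y t j))"
    "sign_compat (u i + u j) ((\<Sum>t\<in>T. c t * y t i) + (\<Sum>t\<in>T. c t * y t j))"
    if "i < n" "j < n" for i j
  proof -
    have "sign_compat (u i - u j) (\<Sum>t\<in>T. c t * (y t i - y t j))"
      using assms that by (intro sign_compat_sum sign_compat_scale) (auto simp: sign_cone_def)
    then show "sign_compat (u i - u j) ((\<Sum>t\<in>T. c t * y t i) - (\<Sum>t\<in>T. c t * y t j))"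
      by (simp add: sum_subtractf algebra_simps)
    have "sign_compat (u i + u j) (\<Sum>t\<in>T. c t * (y t i + y t j))"
      using assms that by (intro sign_compat_sum sign_compat_scale) (auto simp: sign_cone_def)
    then show "sign_compat (u i + u j) ((\<Sum>t\<in>T. c t * y t i) + (\<Sum>t\<in>T. c t * y t j))"
      by (simp add: sum.distrib algebra_simps)
  qed
  ultimately show ?thesis by (auto simp: sign_cone_def)
qed

lemma sign_cone_mono:
  "v \<in> sign_cone n u \<Longrightarrow> sign_cone n v \<subseteq> sign_cone n u"
  unfolding sign_cone_def sign_compat_def by (smt (verit) mem_Collect_eq subsetI)

lemma sign_cone_subset_Wc: "u \<in> Wc n \<Longrightarrow> sign_cone n u \<subseteq> Wc n"
proof
  fix x assume u: "u \<in> Wc n" and x: "x \<in> sign_cone n u"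
  have "x j \<le> x i" if "i \<le> j" "j < n" for i j
  proof -
    have "sign_compat (u i - u j) (x i - x j)" using x that by (auto simp: sign_cone_def)
    moreover have "u j \<le> u i" using u that by (auto simp: Wc_def)
    ultimately show ?thesis unfolding sign_compat_def by auto
  qed
  then show "x \<in> Wc n" using x by (auto simp: Wc_def sign_cone_def)
qed

lemma sign_cone_signed:
  assumes "x \<in> sign_cone n w" "a < n" "b < n" "ea = 1 \<or> ea = -1" "eb = 1 \<or> eb = -1"
  shows "sign_compat (ea * w a - eb * w b) (ea * x a - eb * x b)"
proof -
  have d: "sign_compat (w a - w b) (x a - x b)" "sign_compat (w a + w b) (x a + x b)"
    using assms(1-3) by (auto simp: sign_cone_def)
  from assms(4,5) show ?thesis
  proof (elim disjE)
    assume "ea = -1" "eb = 1"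
    then show ?thesis
      using d sign_compat_neg[of "w a + w b" "x a + x b"] by (simp add: algebra_simps)
  next
    assume "ea = -1" "eb = -1"
    then show ?thesis
      using d sign_compat_neg[of "w a - w b" "x a - x b"] by (simp add: algebra_simps)
  qed (use d in simp_all)
qed

lemma sign_cone_signed1:
  assumes "x \<in> sign_cone n w" "a < n" "ea = 1 \<or> ea = -1"
  shows "sign_compat (ea * w a) (ea * x a)"
proof -
  have "sign_compat (w a + w a) (x a + x a)"
    using assms(1,2) unfolding sign_cone_def by blast
  then have "sign_compat (w a) (x a)" unfolding sign_compat_def by (smt (verit))
  then show ?thesis using assms(3) sign_compat_neg[of "w a" "x a"] by auto
qed

lemma continuous_on_coord: "continuous_on S (\<lambda>z::nat \<Rightarrow> real. z i)"
  by (rule continuous_on_subset[OF continuous_on_product_coordinates]) simp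

lemma closed_sign_compat:
  assumes f: "continuous_on UNIV f"
  shows "closed {x. sign_compat a (f x)}"
proof -
  consider "0 < a" | "a < 0" | "a = 0" by linarith
  then show ?thesis
  proof cases
    case 1
    then have "{x. sign_compat a (f x)} = {x. 0 \<le> f x}" by (auto simp: sign_compat_def)
    then show ?thesis using closed_Collect_le[OF continuous_on_const f] by simp
  next
    case 2
    then have "{x. sign_compat a (f x)} = {x. f x \<le> 0}" by (auto simp: sign_compat_def)
    then show ?thesis using closed_Collect_le[OF f continuous_on_const] by simp
  next
    case 3
    then have "{x. sign_compat a (f x)} = {x. f x = 0}" by (auto simp: sign_compat_def)
    then show ?thesis using closed_Collect_eq[OF f continuous_on_const] by simp
  qed
qed

lemma closed_sign_cone: "closed (sign_cone n u)"
proof -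
  have "sign_cone n u = (\<Inter>i\<in>{n..}. {x. x i = 0}) \<inter>
     (\<Inter>i\<in>{..<n}. \<Inter>j\<in>{..<n}. {x. sign_compat (u i - u j) (x i - x j)} \<inter>
                                {x. sign_compat (u i + u j) (x i + x j)})"
    unfolding sign_cone_def Rn_def by auto
  moreover have "closed (\<Inter>i\<in>{n..}. {x::nat\<Rightarrow>real. x i = 0})"
    by (intro closed_INT ballI closed_Collect_eq continuous_on_const continuous_on_coord)
  moreover have "closed (\<Inter>i\<in>{..<n}. \<Inter>j\<in>{..<n}. {x::nat\<Rightarrow>real. sign_compat (u i - u j) (x i - x j)} \<inter>
                                {x. sign_compat (u i + u j) (x i + x j)})"
    by (intro closed_INT ballI closed_Int closed_sign_compat continuous_intros continuous_on_coord)
  ultimately show ?thesis by (simp add: closed_Int)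
qed

section \<open>Chambers\<close>

lemma arr_complement_iff: "x \<in> arr_complement n \<longleftrightarrow>
   x \<in> W0 n \<and> (\<forall>i<n. x i \<noteq> 0) \<and> (\<forall>i j. i < j \<and> j < n \<longrightarrow> x i + x j \<noteq> 0)"
proof -
  have "x \<in> W0 n \<Longrightarrow> x \<in> Rn n" by (simp add: W0_def)
  then show ?thesis unfolding arr_complement_def lam_perp_def by (auto simp: le_less)
qed

lemma arr_complement_Wc: "u \<in> arr_complement n \<Longrightarrow> u \<in> Wc n"
  by (auto simp: arr_complement_iff W0_def Wc_def le_less)

lemma arr_complement_Rn: "u \<in> arr_complement n \<Longrightarrow> u \<in> Rn n"
  by (simp add: arr_complement_iff W0_def)

definition sign_class :: "nat \<Rightarrow> (nat \<Rightarrow> real) \<Rightarrow> (nat \<Rightarrow> real) set" where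
  "sign_class n u = {x \<in> Rn n. \<forall>i<n. \<forall>j<n.
     sgn (x i - x j) = sgn (u i - u j) \<and> sgn (x i + x j) = sgn (u i + u j)}"

lemma sign_class_subset_arr_complement:
  assumes u: "u \<in> arr_complement n"
  shows "sign_class n u \<subseteq> arr_complement n"
proof
  fix x assume x: "x \<in> sign_class n u"
  have "x j < x i" if "i < j" "j < n" for i j
  proof -
    have "u j < u i" using u that by (auto simp: arr_complement_iff W0_def)
    moreover have "sgn (x i - x j) = sgn (u i - u j)" using x that by (auto simp: sign_class_def)
    ultimately show ?thesis by (simp add: sgn_if split: if_splits)
  qed
  moreover have "x i + x j \<noteq> 0" if "i \<le> j" "j < n" for i j
  proof -
    have "u i + u j \<noteq> 0" using u that by (auto simp: arr_complement_iff le_less)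
    moreover have "sgn (x i + x j) = sgn (u i + u j)" using x that by (auto simp: sign_class_def)
    ultimately show ?thesis by (auto simp: sgn_if split: if_splits)
  qed
  ultimately show "x \<in> arr_complement n"
    using x by (auto simp: arr_complement_iff W0_def sign_class_def) (metis add_0 order_refl)
qed

lemma sign_class_segment:
  assumes x: "x \<in> sign_class n u" and y: "y \<in> sign_class n u" and t: "0 \<le> t" "t \<le> 1"
  shows "(\<lambda>i. (1 - t) * x i + t * y i) \<in> sign_class n u"
proof -
  have comb: "sgn ((1 - t) * a + t * b) = sgn c" if "sgn a = sgn c" "sgn b = sgn c" for a b c :: real
  proof (cases "t = 0")
    case False
    then have "sgn ((1 - t) * a + t * b) = sgn b"
      using sgn_convex_comb[OF sign_compat_if_sgn_eq[of a b], of "1 - t" t] t that by simp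
    with that show ?thesis by simp
  qed (use that in simp)
  have "sgn ((1 - t) * x i + t * y i - ((1 - t) * x j + t * y j)) = sgn (u i - u j) \<and>
        sgn ((1 - t) * x i + t * y i + ((1 - t) * x j + t * y j)) = sgn (u i + u j)"
    if "i < n" "j < n" for i j
  proof -
    have "(1 - t) * x i + t * y i - ((1 - t) * x j + t * y j) = (1 - t) * (x i - x j) + t * (y i - y j)"
      "(1 - t) * x i + t * y i + ((1 - t) * x j + t * y j) = (1 - t) * (x i + x j) + t * (y i + y j)"
      by (simp_all add: algebra_simps)
    moreover have "sgn (x i - x j) = sgn (u i - u j)" "sgn (y i - y j) = sgn (u i - u j)"
      "sgn (x i + x j) = sgn (u i + u j)" "sgn (y i + y j) = sgn (u i + u j)"
      using x y that by (simp_all add: sign_class_def)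
    ultimately show ?thesis by (simp only: comb)
  qed
  moreover have "(\<lambda>i. (1 - t) * x i + t * y i) \<in> Rn n"
    using x y by (simp add: sign_class_def Rn_def)
  ultimately show ?thesis by (simp add: sign_class_def)
qed

lemma continuous_on_segment_fun:
  "continuous_on S (\<lambda>t::real. (\<lambda>i. (1 - t) * x i + t * y i))"
  by (intro continuous_on_coordinatewise_then_product continuous_intros)

lemma sgn_constant_on_connected:
  fixes f :: "'a::topological_space \<Rightarrow> real"
  assumes T: "connected T" and f: "continuous_on T f" and nz: "\<And>z. z \<in> T \<Longrightarrow> f z \<noteq> 0"
    and xy: "x \<in> T" "y \<in> T"
  shows "sgn (f x) = sgn (f y)"
proof (rule ccontr)
  assume ne: "sgn (f x) \<noteq> sgn (f y)"
  have "f x \<noteq> 0" "f y \<noteq> 0" using nz xy by auto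
  with ne have "f x < 0 \<and> 0 < f y \<or> f y < 0 \<and> 0 < f x"
    by (auto simp: sgn_if split: if_splits)
  moreover have "connected (f ` T)" by (rule connected_continuous_image[OF f T])
  ultimately have "0 \<in> f ` T"
    using connected_contains_Icc[of "f ` T" "f x" "f y"] connected_contains_Icc[of "f ` T" "f y" "f x"] xy
    by fastforce
  then show False using nz by auto
qed

lemma arr_complement_diff_nonzero:
  assumes z: "z \<in> arr_complement n" and ij: "i < n" "j < n" "i \<noteq> j"
  shows "z i - z j \<noteq> 0"
proof -
  have mono: "\<And>a b. a < b \<Longrightarrow> b < n \<Longrightarrow> z b < z a"
    using z by (simp add: arr_complement_iff W0_def)
  show ?thesis using mono[of i j] mono[of j i] ij by (cases "i < j") auto
qed

lemma arr_complement_add_nonzero: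
  assumes z: "z \<in> arr_complement n" and ij: "i < n" "j < n"
  shows "z i + z j \<noteq> 0"
proof -
  have nz: "\<And>a. a < n \<Longrightarrow> z a \<noteq> 0"
    and ns: "\<And>a b. a < b \<Longrightarrow> b < n \<Longrightarrow> z a + z b \<noteq> 0"
    using z by (simp_all add: arr_complement_iff)
  show ?thesis
  proof (cases i j rule: linorder_cases)
    case equal
    then show ?thesis using nz[OF ij(1)] by simp
  next
    case greater
    then show ?thesis using ns[OF greater ij(1)] by (simp add: add.commute)
  qed (use ns ij in auto)
qed

lemma sign_class_subset_connected_component:
  assumes u: "u \<in> arr_complement n"
  shows "sign_class n u \<subseteq> connected_component_set (arr_complement n) u"
proof
  fix x assume x: "x \<in> sign_class n u"
  have uu: "u \<in> sign_class n u" using arr_complement_Rn[OF u] by (simp add: sign_class_def)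
  define p where "p t = (\<lambda>i. (1 - t) * u i + t * x i)" for t :: real
  have "p ` {0..1} \<subseteq> sign_class n u"
    using sign_class_segment[OF uu x] by (auto simp: p_def)
  moreover have "connected (p ` {0..1})"
    unfolding p_def by (rule connected_continuous_image[OF continuous_on_segment_fun]) simp
  moreover have "u \<in> p ` {0..1}" by (rule image_eqI[of _ _ 0]) (auto simp: p_def)
  moreover have "x \<in> p ` {0..1}" by (rule image_eqI[of _ _ 1]) (auto simp: p_def)
  ultimately show "x \<in> connected_component_set (arr_complement n) u"
    using sign_class_subset_arr_complement[OF u]
    by (simp add: connected_componentI[of "p ` {0..1}"])
qed

lemma connected_component_subset_sign_class:
  "connected_component_set (arr_complement n) u \<subseteq> sign_class n u"
proof
  fix y assume "y \<in> connected_component_set (arr_complement n) u"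
  then obtain T where T: "connected T" "T \<subseteq> arr_complement n" "u \<in> T" "y \<in> T"
    by (auto simp: connected_component_def)
  have sgn_eq: "sgn (f y) = sgn (f u)"
    if "\<And>z. z \<in> arr_complement n \<Longrightarrow> f z \<noteq> 0" "continuous_on T f"
    for f :: "(nat \<Rightarrow> real) \<Rightarrow> real"
    using sgn_constant_on_connected[OF T(1) that(2) _ T(4) T(3)] that(1) T(2) by blast
  have "sgn (y i - y j) = sgn (u i - u j) \<and> sgn (y i + y j) = sgn (u i + u j)"
    if ij: "i < n" "j < n" for i j
  proof
    show "sgn (y i - y j) = sgn (u i - u j)"
      using sgn_eq[of "\<lambda>z. z i - z j"] arr_complement_diff_nonzero[OF _ ij]
        continuous_on_diff[OF continuous_on_coord continuous_on_coord]
      by (cases "i = j") simp_all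
    show "sgn (y i + y j) = sgn (u i + u j)"
      using sgn_eq[of "\<lambda>z. z i + z j"] arr_complement_add_nonzero[OF _ ij]
        continuous_on_add[OF continuous_on_coord continuous_on_coord]
      by simp
  qed
  moreover have "y \<in> Rn n" using T arr_complement_Rn by blast
  ultimately show "y \<in> sign_class n u" by (simp add: sign_class_def)
qed

lemma connected_component_arr_complement:
  "u \<in> arr_complement n \<Longrightarrow> connected_component_set (arr_complement n) u = sign_class n u"
  by (intro subset_antisym connected_component_subset_sign_class sign_class_subset_connected_component)

lemma closure_sign_class:
  assumes u: "u \<in> arr_complement n"
  shows "closure (sign_class n u) = sign_cone n u"
proof
  have "sign_class n u \<subseteq> sign_cone n u"
    by (auto simp: sign_class_def sign_cone_def intro!: sign_compat_if_sgn_eq)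
  then show "closure (sign_class n u) \<subseteq> sign_cone n u"
    using closed_sign_cone closure_minimal by blast
next
  show "sign_cone n u \<subseteq> closure (sign_class n u)"
  proof
    fix x assume x: "x \<in> sign_cone n u"
    define q where "q t = (\<lambda>i. (1 - t) * x i + t * u i)" for t :: real
    have qA: "q ` {0<..1} \<subseteq> sign_class n u"
    proof
      fix y assume "y \<in> q ` {0<..1}"
      then obtain t where t: "0 < t" "t \<le> 1" "y = q t" by auto
      have "y \<in> Rn n" using arr_complement_Rn[OF u] x t by (auto simp: Rn_def sign_cone_def q_def)
      moreover have "sgn (y i - y j) = sgn (u i - u j) \<and> sgn (y i + y j) = sgn (u i + u j)"
        if "i < n" "j < n" for i j
      proof -
        have "sign_compat (u i - u j) (x i - x j)" "sign_compat (u i + u j) (x i + x j)"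
          using x that by (auto simp: sign_cone_def)
        then have "sgn ((1 - t) * (x i - x j) + t * (u i - u j)) = sgn (u i - u j)"
          "sgn ((1 - t) * (x i + x j) + t * (u i + u j)) = sgn (u i + u j)"
          using t by (simp_all add: sgn_convex_comb)
        moreover have "y i - y j = (1 - t) * (x i - x j) + t * (u i - u j)"
             "y i + y j = (1 - t) * (x i + x j) + t * (u i + u j)"
          by (simp_all add: t q_def algebra_simps)
        ultimately show ?thesis by simp
      qed
      ultimately show "y \<in> sign_class n u" by (auto simp: sign_class_def)
    qed
    have "q ` closure {0<..1} \<subseteq> closure (sign_class n u)"
      by (rule image_closure_subset)
        (use qA closure_subset in \<open>auto simp: q_def intro: continuous_on_segment_fun\<close>)
    moreover have "x = q 0" by (simp add: q_def)
    ultimately show "x \<in> closure (sign_class n u)" by auto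
  qed
qed

lemma chambers_eq: "chambers n = sign_cone n ` arr_complement n"
proof -
  have "chambers n = (\<lambda>u. closure (connected_component_set (arr_complement n) u)) ` arr_complement n"
    unfolding chambers_def by (rule Setcompr_eq_image)
  also have "\<dots> = sign_cone n ` arr_complement n"
    by (rule image_cong) (simp_all add: connected_component_arr_complement closure_sign_class)
  finally show ?thesis .
qed

section \<open>The simplicial cone of a regular point\<close>

text \<open>Ordering the
  coordinates by absolute value, sign_cone n u is the simplicial cone spanned by the rays
  ray 1, \<dots>, ray n, where ray t is eps on the coordinates of absolute rank at least t, and
  ray_coeff t x is the coefficient of ray t in x.\<close>

locale regular_point =
  fixes n :: nat and u :: "nat \<Rightarrow> real"
  assumes u_Rn: "u \<in> Rn n"
    and u_nonzero: "\<And>i. i < n \<Longrightarrow> u i \<noteq> 0"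
    and abs_u_inj: "\<And>i j. i < n \<Longrightarrow> j < n \<Longrightarrow> i \<noteq> j \<Longrightarrow> \<bar>u i\<bar> \<noteq> \<bar>u j\<bar>"
begin

definition eps :: "nat \<Rightarrow> real" where
  "eps i = sgn (u i)"

definition abs_rank :: "nat \<Rightarrow> nat" where
  "abs_rank i = card {j. j < n \<and> \<bar>u j\<bar> \<le> \<bar>u i\<bar>}"

definition ray :: "nat \<Rightarrow> nat \<Rightarrow> real" where
  "ray t = (\<lambda>i. if i < n \<and> t \<le> abs_rank i then eps i else 0)"

definition rank_coord :: "nat \<Rightarrow> (nat \<Rightarrow> real) \<Rightarrow> real" where
  "rank_coord s x = (\<Sum>i<n. if abs_rank i = s then eps i * x i else 0)"

definition ray_coeff :: "nat \<Rightarrow> (nat \<Rightarrow> real) \<Rightarrow> real" where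
  "ray_coeff t x = rank_coord t x - rank_coord (t - 1) x"

lemma eps_cases: "i < n \<Longrightarrow> eps i = 1 \<or> eps i = -1"
  using u_nonzero[of i] by (auto simp: eps_def sgn_if)

lemma eps_mult_self: "i < n \<Longrightarrow> eps i * eps i = 1"
  using eps_cases[of i] by auto

lemma u_eq_eps_abs: "u i = eps i * \<bar>u i\<bar>"
  by (simp add: eps_def sgn_mult_abs)

lemma eps_mult_u: "eps i * u i = \<bar>u i\<bar>"
  by (simp add: eps_def abs_sgn)

lemma abs_rank_ge1: "i < n \<Longrightarrow> 1 \<le> abs_rank i"
proof -
  assume "i < n"
  then have "i \<in> {j. j < n \<and> \<bar>u j\<bar> \<le> \<bar>u i\<bar>}" by auto
  then show ?thesis unfolding abs_rank_def
    by (metis (no_types, lifting) One_nat_def Suc_leI card_gt_0_iff empty_iff finite_nat_set_iff_bounded mem_Collect_eq)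
qed

lemma abs_rank_le: "abs_rank i \<le> n"
proof -
  have "{j. j < n \<and> \<bar>u j\<bar> \<le> \<bar>u i\<bar>} \<subseteq> {..<n}" by auto
  then show ?thesis unfolding abs_rank_def by (metis card_lessThan card_mono finite_lessThan)
qed

lemma finite_indices: "finite {j. j < n \<and> P j}"
  by (rule finite_subset[of _ "{..<n}"]) auto

lemma abs_rank_mono:
  "i < n \<Longrightarrow> j < n \<Longrightarrow> \<bar>u j\<bar> \<le> \<bar>u i\<bar> \<Longrightarrow> abs_rank j \<le> abs_rank i"
  unfolding abs_rank_def by (intro card_mono finite_indices) (auto intro: order_trans)

lemma abs_rank_strict_mono:
  "i < n \<Longrightarrow> j < n \<Longrightarrow> \<bar>u j\<bar> < \<bar>u i\<bar> \<Longrightarrow> abs_rank j < abs_rank i"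
  unfolding abs_rank_def
proof (intro psubset_card_mono finite_indices)
  assume "i < n" "j < n" "\<bar>u j\<bar> < \<bar>u i\<bar>"
  show "{ja. ja < n \<and> \<bar>u ja\<bar> \<le> \<bar>u j\<bar>} \<subset> {j. j < n \<and> \<bar>u j\<bar> \<le> \<bar>u i\<bar>}"
  proof (rule psubsetI)
    show "{ja. ja < n \<and> \<bar>u ja\<bar> \<le> \<bar>u j\<bar>} \<subseteq> {j. j < n \<and> \<bar>u j\<bar> \<le> \<bar>u i\<bar>}"
      using \<open>\<bar>u j\<bar> < \<bar>u i\<bar>\<close> by auto
    have "i \<in> {j. j < n \<and> \<bar>u j\<bar> \<le> \<bar>u i\<bar>}" using \<open>i < n\<close> by simp
    moreover have "i \<notin> {ja. ja < n \<and> \<bar>u ja\<bar> \<le> \<bar>u j\<bar>}" using \<open>\<bar>u j\<bar> < \<bar>u i\<bar>\<close> by simp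
    ultimately show "{ja. ja < n \<and> \<bar>u ja\<bar> \<le> \<bar>u j\<bar>} \<noteq> {j. j < n \<and> \<bar>u j\<bar> \<le> \<bar>u i\<bar>}" by blast
  qed
qed

lemma abs_rank_le_iff:
  "i < n \<Longrightarrow> j < n \<Longrightarrow> abs_rank j \<le> abs_rank i \<longleftrightarrow> \<bar>u j\<bar> \<le> \<bar>u i\<bar>"
proof
  assume ij: "i < n" "j < n" and r: "abs_rank j \<le> abs_rank i"
  show "\<bar>u j\<bar> \<le> \<bar>u i\<bar>"
  proof (rule ccontr)
    assume "\<not> \<bar>u j\<bar> \<le> \<bar>u i\<bar>"
    then have "\<bar>u i\<bar> < \<bar>u j\<bar>" by simp
    from abs_rank_strict_mono[OF ij(2) ij(1) this] r show False by simp
  qed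
qed (rule abs_rank_mono)

lemma abs_rank_less_iff:
  "i < n \<Longrightarrow> j < n \<Longrightarrow> abs_rank j < abs_rank i \<longleftrightarrow> \<bar>u j\<bar> < \<bar>u i\<bar>"
  using abs_rank_le_iff[of j i] by linarith

lemma abs_rank_eq_iff:
  "i < n \<Longrightarrow> j < n \<Longrightarrow> abs_rank j = abs_rank i \<longleftrightarrow> j = i"
proof
  assume ij: "i < n" "j < n" and r: "abs_rank j = abs_rank i"
  then have "\<bar>u j\<bar> = \<bar>u i\<bar>" using abs_rank_le_iff[OF ij] abs_rank_le_iff[OF ij(2,1)] by simp
  then show "j = i" using abs_u_inj[OF ij(2,1)] by auto
qed simp

lemma inj_on_abs_rank: "inj_on abs_rank {..<n}"
  using abs_rank_eq_iff by (auto simp: inj_on_def)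

lemma abs_rank_image: "abs_rank ` {..<n} = {1..n}"
proof -
  have "abs_rank ` {..<n} \<subseteq> {1..n}" using abs_rank_ge1 abs_rank_le by auto
  moreover have "card (abs_rank ` {..<n}) = card {1..n}"
    using card_image[OF inj_on_abs_rank] by simp
  ultimately show ?thesis by (simp add: card_subset_eq)
qed

lemma abs_rank_surj: "s \<in> {1..n} \<Longrightarrow> \<exists>i<n. abs_rank i = s"
  using abs_rank_image by (metis imageE lessThan_iff)

lemma rank_coord_abs_rank: "i < n \<Longrightarrow> rank_coord (abs_rank i) x = eps i * x i"
proof -
  assume i: "i < n"
  have "rank_coord (abs_rank i) x = (\<Sum>j<n. if j = i then eps j * x j else 0)"
    unfolding rank_coord_def using abs_rank_eq_iff[OF i] by (intro sum.cong) auto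
  also have "\<dots> = eps i * x i" using i by simp
  finally show ?thesis .
qed

lemma rank_coord_0: "rank_coord 0 x = 0"
  unfolding rank_coord_def using abs_rank_ge1 by (intro sum.neutral) (auto dest: abs_rank_ge1)

lemma rank_coord_out: "s = 0 \<or> n < s \<Longrightarrow> rank_coord s x = 0"
  unfolding rank_coord_def
proof (intro sum.neutral ballI)
  fix i assume "s = 0 \<or> n < s" "i \<in> {..<n}"
  then have "abs_rank i \<noteq> s" using abs_rank_ge1[of i] abs_rank_le[of i] by auto
  then show "(if abs_rank i = s then eps i * x i else 0) = 0" by simp
qed

lemma sum_ray_coeff: "(\<Sum>t\<in>{1..r}. ray_coeff t x) = rank_coord r x"
proof (induction r)
  case 0 then show ?case by (simp add: rank_coord_0)
next
  case (Suc r)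
  have "{1..Suc r} = insert (Suc r) {1..r}" by auto
  then show ?case using Suc by (simp add: ray_coeff_def)
qed

lemma ray_decomp:
  assumes "x \<in> Rn n"
  shows "x = (\<lambda>i. \<Sum>t\<in>{1..n}. ray_coeff t x * ray t i)"
proof
  fix i
  show "x i = (\<Sum>t\<in>{1..n}. ray_coeff t x * ray t i)"
  proof (cases "i < n")
    case True
    have "(\<Sum>t\<in>{1..n}. ray_coeff t x * ray t i) = (\<Sum>t\<in>{1..n}. if t \<le> abs_rank i then eps i * ray_coeff t x else 0)"
      unfolding ray_def using True by (intro sum.cong) auto
    also have "\<dots> = (\<Sum>t\<in>{1..n} \<inter> {t. t \<le> abs_rank i}. eps i * ray_coeff t x)"
      by (simp add: sum.inter_restrict)
    also have "{1..n} \<inter> {t. t \<le> abs_rank i} = {1..abs_rank i}" using abs_rank_le[of i] by auto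
    also have "(\<Sum>t\<in>{1..abs_rank i}. eps i * ray_coeff t x) = eps i * (\<Sum>t\<in>{1..abs_rank i}. ray_coeff t x)"
      by (rule sum_distrib_left[symmetric])
    also have "\<dots> = eps i * rank_coord (abs_rank i) x" by (simp only: sum_ray_coeff)
    also have "\<dots> = x i" using rank_coord_abs_rank[OF True] eps_mult_self[OF True] by (simp add: mult.assoc[symmetric])
    finally show ?thesis by simp
  next
    case False
    then show ?thesis using assms by (simp add: ray_def Rn_def)
  qed
qed

lemma rank_coord_ray:
  "rank_coord s (ray t) = (if 1 \<le> s \<and> s \<le> n \<and> t \<le> s then 1 else 0)"
proof (cases "1 \<le> s \<and> s \<le> n")
  case True
  then obtain i where i: "i < n" "abs_rank i = s" using abs_rank_surj by auto
  show ?thesis using rank_coord_abs_rank[OF i(1)] i eps_mult_self[OF i(1)] True by (simp add: ray_def)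
next
  case False
  then show ?thesis using rank_coord_out by auto
qed

lemma ray_coeff_ray:
  "s \<in> {1..n} \<Longrightarrow> t \<in> {1..n} \<Longrightarrow> ray_coeff s (ray t) = (if s = t then 1 else 0)"
  unfolding ray_coeff_def rank_coord_ray by auto

lemma rank_coord_lincomb:
  "rank_coord s (\<lambda>i. \<Sum>t\<in>T. c t * y t i) = (\<Sum>t\<in>T. c t * rank_coord s (y t))"
proof -
  have "rank_coord s (\<lambda>i. \<Sum>t\<in>T. c t * y t i) = (\<Sum>i<n. \<Sum>t\<in>T. if abs_rank i = s then c t * (eps i * y t i) else 0)"
    unfolding rank_coord_def
  proof (intro sum.cong refl)
    fix i
    show "(if abs_rank i = s then eps i * (\<Sum>t\<in>T. c t * y t i) else 0) =
        (\<Sum>t\<in>T. if abs_rank i = s then c t * (eps i * y t i) else 0)"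
      by (cases "abs_rank i = s") (simp_all add: sum_distrib_left algebra_simps)
  qed
  also have "\<dots> = (\<Sum>t\<in>T. \<Sum>i<n. if abs_rank i = s then c t * (eps i * y t i) else 0)"
    by (rule sum.swap)
  also have "\<dots> = (\<Sum>t\<in>T. c t * rank_coord s (y t))"
    unfolding rank_coord_def
  proof (intro sum.cong refl)
    fix t
    show "(\<Sum>i<n. if abs_rank i = s then c t * (eps i * y t i) else 0) =
        c t * (\<Sum>i<n. if abs_rank i = s then eps i * y t i else 0)"
      by (auto simp: sum_distrib_left intro!: sum.cong)
  qed
  finally show ?thesis .
qed

lemma ray_coeff_lincomb:
  "ray_coeff s (\<lambda>i. \<Sum>t\<in>T. c t * y t i) = (\<Sum>t\<in>T. c t * ray_coeff s (y t))"
  unfolding ray_coeff_def rank_coord_lincomb by (simp add: sum_subtractf algebra_simps)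

lemma ray_Rn: "ray t \<in> Rn n"
  by (simp add: ray_def Rn_def)

lemma ray_sign_compat:
  assumes i: "i < n" and j: "j < n" and e: "e = 1 \<or> e = -1"
  shows "sign_compat (u i - e * u j) (ray t i - e * ray t j)"
proof -
  define A where "A = \<bar>u i\<bar>"
  define B where "B = \<bar>u j\<bar>"
  define \<alpha> where "\<alpha> = (if t \<le> abs_rank i then 1 else 0::real)"
  define \<beta> where "\<beta> = (if t \<le> abs_rank j then 1 else 0::real)"
  define f where "f = e * eps j"
  have f: "f = 1 \<or> f = -1" using e eps_cases[OF j] by (auto simp: f_def)
  have ui: "u i - e * u j = eps i * A - f * B"
    using u_eq_eps_abs[of i] u_eq_eps_abs[of j] by (simp add: A_def B_def f_def)
  have ri: "ray t i - e * ray t j = eps i * \<alpha> - f * \<beta>"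
    using i j by (simp add: ray_def \<alpha>_def \<beta>_def f_def)
  have c1: "sign_compat (A - B) (\<alpha> - \<beta>)"
  proof -
    have "A > B \<Longrightarrow> \<alpha> \<ge> \<beta>" using abs_rank_strict_mono[OF i j] by (auto simp: A_def B_def \<alpha>_def \<beta>_def)
    moreover have "A < B \<Longrightarrow> \<alpha> \<le> \<beta>" using abs_rank_strict_mono[OF j i] by (auto simp: A_def B_def \<alpha>_def \<beta>_def)
    moreover have "A = B \<Longrightarrow> \<alpha> = \<beta>" using abs_u_inj[OF i j] by (auto simp: A_def B_def \<alpha>_def \<beta>_def)
    ultimately show ?thesis unfolding sign_compat_def by auto
  qed
  have c2: "sign_compat (A + B) (\<alpha> + \<beta>)"
  proof -
    have "A > 0" using u_nonzero[OF i] by (simp add: A_def)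
    moreover have "B > 0" using u_nonzero[OF j] by (simp add: B_def)
    moreover have "\<alpha> \<ge> 0" "\<beta> \<ge> 0" by (auto simp: \<alpha>_def \<beta>_def)
    ultimately show ?thesis unfolding sign_compat_def by auto
  qed
  have "sign_compat (eps i * A - f * B) (eps i * \<alpha> - f * \<beta>)" (is ?G)
    using eps_cases[OF i] f
  proof (elim disjE)
    assume "eps i = 1" "f = 1" then show ?G using c1 by simp
  next
    assume "eps i = 1" "f = -1" then show ?G using c2 by simp
  next
    assume "eps i = -1" "f = 1" then show ?G using c2 sign_compat_neg[of "A+B" "\<alpha>+\<beta>"] by (simp add: algebra_simps)
  next
    assume "eps i = -1" "f = -1" then show ?G using c1 sign_compat_neg[of "A-B" "\<alpha>-\<beta>"] by (simp add: algebra_simps)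
  qed
  then show ?thesis using ui ri by simp
qed

lemma ray_in_sign_cone: "ray t \<in> sign_cone n u"
proof -
  have "sign_compat (u i - u j) (ray t i - ray t j) \<and> sign_compat (u i + u j) (ray t i + ray t j)"
    if "i < n" "j < n" for i j
    using ray_sign_compat[OF that, of 1 t] ray_sign_compat[OF that, of "-1" t] by simp
  then show ?thesis using ray_Rn by (simp add: sign_cone_def)
qed

lemma ray_coeff_cases:
  assumes t: "t \<in> {1..n}"
  obtains a where "a < n" "abs_rank a = t" "\<And>x. ray_coeff t x = eps a * x a" "t = 1"
  | a b where "a < n" "b < n" "abs_rank a = t" "abs_rank b = t - 1" "\<And>x. ray_coeff t x = eps a * x a - eps b * x b" "t \<noteq> 1"
proof (cases "t = 1")
  case True
  obtain a where a: "a < n" "abs_rank a = t" using abs_rank_surj t by auto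
  have "\<And>x. ray_coeff t x = eps a * x a" unfolding ray_coeff_def using rank_coord_abs_rank[OF a(1)] a(2) True rank_coord_0 by simp
  from that(1)[OF a this True] show ?thesis .
next
  case False
  obtain a where a: "a < n" "abs_rank a = t" using abs_rank_surj t by auto
  have "t - 1 \<in> {1..n}" using t False by auto
  then obtain b where b: "b < n" "abs_rank b = t - 1" using abs_rank_surj by blast
  have "ray_coeff t x = eps a * x a - eps b * x b" for x
  proof -
    have "ray_coeff t x = rank_coord (abs_rank a) x - rank_coord (abs_rank b) x" using a b by (simp add: ray_coeff_def)
    then show ?thesis using rank_coord_abs_rank[OF a(1)] rank_coord_abs_rank[OF b(1)] by simp
  qed
  from that(2)[OF a(1) b(1) a(2) b(2) this False] show ?thesis .
qed

lemma ray_coeff_sign_compat: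
  assumes t: "t \<in> {1..n}" and x: "x \<in> sign_cone n w"
  shows "sign_compat (ray_coeff t w) (ray_coeff t x)"
  using t
proof (cases rule: ray_coeff_cases)
  case (1 a)
  then show ?thesis using sign_cone_signed1[OF x 1(1) eps_cases[OF 1(1)]] by simp
next
  case (2 a b)
  then show ?thesis using sign_cone_signed[OF x 2(1,2) eps_cases[OF 2(1)] eps_cases[OF 2(2)]] by simp
qed

lemma ray_coeff_u_pos: assumes t: "t \<in> {1..n}" shows "0 < ray_coeff t u"
  using t
proof (cases rule: ray_coeff_cases)
  case (1 a)
  then show ?thesis using u_nonzero[of a] by (simp add: eps_mult_u)
next
  case (2 a b)
  then have "\<bar>u b\<bar> < \<bar>u a\<bar>" using abs_rank_less_iff[of a b] t by simp
  then show ?thesis using 2 by (simp add: eps_mult_u)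
qed

lemma sign_cone_eq: "sign_cone n u = {x \<in> Rn n. \<forall>t\<in>{1..n}. 0 \<le> ray_coeff t x}"
proof
  show "sign_cone n u \<subseteq> {x \<in> Rn n. \<forall>t\<in>{1..n}. 0 \<le> ray_coeff t x}"
  proof
    fix x assume x: "x \<in> sign_cone n u"
    have "0 \<le> ray_coeff t x" if "t \<in> {1..n}" for t
      using ray_coeff_sign_compat[OF that x] ray_coeff_u_pos[OF that] unfolding sign_compat_def by auto
    then show "x \<in> {x \<in> Rn n. \<forall>t\<in>{1..n}. 0 \<le> ray_coeff t x}" using x by (auto simp: sign_cone_def)
  qed
next
  show "{x \<in> Rn n. \<forall>t\<in>{1..n}. 0 \<le> ray_coeff t x} \<subseteq> sign_cone n u"
  proof
    fix x assume x: "x \<in> {x \<in> Rn n. \<forall>t\<in>{1..n}. 0 \<le> ray_coeff t x}"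
    then have "x = (\<lambda>i. \<Sum>t\<in>{1..n}. ray_coeff t x * ray t i)" using ray_decomp by auto
    also have "\<dots> \<in> sign_cone n u" using x ray_in_sign_cone by (intro sign_cone_nonneg_comb) auto
    finally show "x \<in> sign_cone n u" .
  qed
qed

lemma ray_coeff_nonneg:
  "x \<in> sign_cone n u \<Longrightarrow> t \<in> {1..n} \<Longrightarrow> 0 \<le> ray_coeff t x"
  using sign_cone_eq by auto

lemma ray_in_face:
  assumes w: "w \<in> sign_cone n u" and t: "t \<in> {1..n}" and nz: "ray_coeff t w \<noteq> 0"
  shows "ray t \<in> sign_cone n w"
proof -
  have wR: "w \<in> Rn n" using w by (simp add: sign_cone_def)
  have wd: "w = (\<lambda>i. \<Sum>s\<in>{1..n}. ray_coeff s w * ray s i)" using ray_decomp[OF wR] .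
  have pos: "\<And>s. s \<in> {1..n} \<Longrightarrow> 0 \<le> ray_coeff s w" using w sign_cone_eq by auto
  then have tpos: "0 < ray_coeff t w" using nz t by force
  have "sign_compat (w i - e * w j) (ray t i - e * ray t j)" if "i < n" "j < n" "e = 1 \<or> e = -1" for i j e
  proof -
    have "w i - e * w j = (\<Sum>s\<in>{1..n}. ray_coeff s w * (ray s i - e * ray s j))"
      by (subst (1 2) wd) (simp add: sum_subtractf sum_distrib_left algebra_simps)
    moreover have "sign_compat (\<Sum>s\<in>{1..n}. ray_coeff s w * (ray s i - e * ray s j)) (ray t i - e * ray t j)"
      by (rule sign_compat_sum_term[where a="u i - e * u j"]) (use t tpos pos ray_sign_compat[OF that] in auto)
    ultimately show ?thesis by simp
  qed
  from this[of _ _ 1] this[of _ _ "-1"] show ?thesis using ray_Rn by (simp add: sign_cone_def)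
qed

lemma sign_cone_of_member:
  assumes w: "w \<in> sign_cone n u"
  shows "sign_cone n w = {x \<in> sign_cone n u. \<forall>t\<in>{1..n}. ray_coeff t w = 0 \<longrightarrow> ray_coeff t x = 0}"
proof
  show "sign_cone n w \<subseteq> {x \<in> sign_cone n u. \<forall>t\<in>{1..n}. ray_coeff t w = 0 \<longrightarrow> ray_coeff t x = 0}"
    using sign_cone_mono[OF w] ray_coeff_sign_compat unfolding sign_compat_def by blast
next
  show "{x \<in> sign_cone n u. \<forall>t\<in>{1..n}. ray_coeff t w = 0 \<longrightarrow> ray_coeff t x = 0} \<subseteq> sign_cone n w"
  proof
    fix x assume x: "x \<in> {x \<in> sign_cone n u. \<forall>t\<in>{1..n}. ray_coeff t w = 0 \<longrightarrow> ray_coeff t x = 0}"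
    then have xR: "x \<in> Rn n" by (simp add: sign_cone_def)
    have pos: "\<And>t. t \<in> {1..n} \<Longrightarrow> 0 \<le> ray_coeff t x" using x sign_cone_eq by auto
    have "x = (\<lambda>i. \<Sum>t\<in>{1..n}. ray_coeff t x * ray t i)" using ray_decomp[OF xR] .
    also have "\<dots> = (\<lambda>i. \<Sum>t\<in>{t\<in>{1..n}. ray_coeff t w \<noteq> 0}. ray_coeff t x * ray t i)"
      using x by (intro ext sum.mono_neutral_right) auto
    also have "\<dots> \<in> sign_cone n w" using ray_in_face[OF w] pos by (intro sign_cone_nonneg_comb) auto
    finally show "x \<in> sign_cone n w" .
  qed
qed

lemma ray_coeff_ray_image:
  "s \<in> {1..n} \<Longrightarrow> v \<in> ray ` {1..n} \<Longrightarrow> ray_coeff s v = (if v = ray s then 1 else 0)"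
proof -
  assume s: "s \<in> {1..n}" and v: "v \<in> ray ` {1..n}"
  then obtain t where t: "t \<in> {1..n}" "v = ray t" by auto
  show ?thesis
  proof (cases "t = s")
    case True then show ?thesis using t s ray_coeff_ray by simp
  next
    case False
    have "ray t \<noteq> ray s"
    proof
      assume "ray t = ray s"
      then have "ray_coeff s (ray t) = ray_coeff s (ray s)" by simp
      then show False using ray_coeff_ray[OF s t(1)] ray_coeff_ray[OF s s] False by simp
    qed
    then show ?thesis using t s ray_coeff_ray False by simp
  qed
qed

lemma inj_on_ray: "inj_on ray {1..n}"
proof (rule inj_onI)
  fix s t assume s: "s \<in> {1..n}" and t: "t \<in> {1..n}" and e: "ray s = ray t"
  have "ray_coeff s (ray s) = ray_coeff s (ray t)" using e by simp
  then show "s = t" using ray_coeff_ray[OF s s] ray_coeff_ray[OF s t] by (auto split: if_splits)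
qed

lemma sum_scaleF: "(\<Sum>v\<in>T. scaleF (c v) (f v)) = (\<lambda>i. \<Sum>v\<in>T. c v * f v i)"
  by (rule ext) (simp add: sum_fun_apply scaleF_def)

lemma independent_rays:
  assumes T: "T \<subseteq> {1..n}"
  shows "VS.independent (ray ` T)"
  unfolding VS.independent_explicit_module
proof (intro allI impI)
  fix T0 c v
  assume a1: "finite T0" "T0 \<subseteq> ray ` T" "(\<Sum>v\<in>T0. scaleF (c v) v) = 0" "v \<in> T0"
  then have a: "finite T0 \<and> T0 \<subseteq> ray ` T \<and> (\<Sum>v\<in>T0. scaleF (c v) v) = 0 \<and> v \<in> T0" by simp
  then obtain s where s: "s \<in> T" "v = ray s" by auto
  have s1: "s \<in> {1..n}" using s T by auto
  have "(\<lambda>i. \<Sum>v\<in>T0. c v * v i) = 0" using a sum_scaleF[of c "\<lambda>v. v" T0] by simp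
  then have h: "\<And>i. (\<Sum>v\<in>T0. c v * v i) = 0" by (metis zero_fun_apply)
  have "ray_coeff s (\<lambda>i. \<Sum>v\<in>T0. c v * v i) = 0" by (simp add: ray_coeff_def rank_coord_def h cong: if_cong)
  then have "(\<Sum>v\<in>T0. c v * ray_coeff s v) = 0" by (simp add: ray_coeff_lincomb)
  moreover have "(\<Sum>v\<in>T0. c v * ray_coeff s v) = (\<Sum>v\<in>T0. if v = ray s then c v else 0)"
  proof (intro sum.cong refl)
    fix v assume "v \<in> T0"
    then have "v \<in> ray ` {1..n}" using a T by blast
    then show "c v * ray_coeff s v = (if v = ray s then c v else 0)" using ray_coeff_ray_image[OF s1] by simp
  qed
  moreover have "\<dots> = c (ray s)" using a s by (simp add: sum.delta)
  ultimately show "c v = 0" using s by simp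
qed

lemma in_span_rays:
  assumes x: "x \<in> sign_cone n u" and w: "w \<in> sign_cone n u" and z: "\<forall>t\<in>{1..n}. ray_coeff t w = 0 \<longrightarrow> ray_coeff t x = 0"
  shows "x = (\<lambda>i. \<Sum>t\<in>{t\<in>{1..n}. ray_coeff t w \<noteq> 0}. ray_coeff t x * ray t i)"
proof -
  have xR: "x \<in> Rn n" using x by (simp add: sign_cone_def)
  have "x = (\<lambda>i. \<Sum>t\<in>{1..n}. ray_coeff t x * ray t i)" using ray_decomp[OF xR] .
  also have "\<dots> = (\<lambda>i. \<Sum>t\<in>{t\<in>{1..n}. ray_coeff t w \<noteq> 0}. ray_coeff t x * ray t i)"
    using z by (intro ext sum.mono_neutral_right) auto
  finally show ?thesis .
qed

lemma span_dim_sign_cone: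
  assumes w: "w \<in> sign_cone n u"
  shows "span_dim (sign_cone n w) = card {t\<in>{1..n}. ray_coeff t w \<noteq> 0}"
proof -
  define T' where "T' = {t\<in>{1..n}. ray_coeff t w \<noteq> 0}"
  define R where "R = ray ` T'"
  have RG: "R \<subseteq> sign_cone n w" using ray_in_face[OF w] by (auto simp: R_def T'_def)
  have GR: "sign_cone n w \<subseteq> VS.span R"
  proof
    fix x assume xw: "x \<in> sign_cone n w"
    then have x: "x \<in> sign_cone n u" "\<forall>t\<in>{1..n}. ray_coeff t w = 0 \<longrightarrow> ray_coeff t x = 0"
      using sign_cone_of_member[OF w] by auto
    have "x = (\<lambda>i. \<Sum>t\<in>T'. ray_coeff t x * ray t i)" using in_span_rays[OF x(1) w x(2)] by (simp add: T'_def)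
    also have "\<dots> = (\<Sum>t\<in>T'. scaleF (ray_coeff t x) (ray t))" using sum_scaleF[of "\<lambda>t. ray_coeff t x" ray T'] by simp
    also have "\<dots> \<in> VS.span R"
      by (intro VS.span_sum VS.span_scale VS.span_base) (auto simp: R_def)
    finally show "x \<in> VS.span R" .
  qed
  have "VS.span (sign_cone n w) = VS.span R"
  proof
    show "VS.span (sign_cone n w) \<subseteq> VS.span R" using VS.span_mono[OF GR] VS.span_span by simp
    show "VS.span R \<subseteq> VS.span (sign_cone n w)" using VS.span_mono[OF RG] .
  qed
  then have "span_dim (sign_cone n w) = VS.dim R"
    unfolding span_dim_def by (metis VS.dim_span)
  also have "\<dots> = card R"
  proof -
    have "T' \<subseteq> {1..n}" by (auto simp: T'_def)
    from independent_rays[OF this] show ?thesis by (intro VS.dim_eq_card_independent) (simp add: R_def)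
  qed
  also have "\<dots> = card T'" unfolding R_def
    by (rule card_image) (rule inj_on_subset[OF inj_on_ray], auto simp: T'_def)
  finally show ?thesis by (simp add: T'_def)
qed

definition face_point :: "nat set \<Rightarrow> nat \<Rightarrow> real" where
  "face_point Z = (\<lambda>i. \<Sum>t\<in>{1..n} - Z. 1 * ray t i)"

lemma face_point_in_sign_cone: "face_point Z \<in> sign_cone n u"
  unfolding face_point_def by (rule sign_cone_nonneg_comb) (auto intro: ray_in_sign_cone)

lemma ray_coeff_face_point:
  "t \<in> {1..n} \<Longrightarrow> ray_coeff t (face_point Z) = (if t \<in> Z then 0 else 1)"
proof -
  assume t: "t \<in> {1..n}"
  have "ray_coeff t (face_point Z) = (\<Sum>s\<in>{1..n} - Z. 1 * ray_coeff t (ray s))" unfolding face_point_def ray_coeff_lincomb ..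
  also have "\<dots> = (\<Sum>s\<in>{1..n} - Z. if t = s then 1 else 0)"
    using ray_coeff_ray[OF t] by (intro sum.cong) auto
  also have "\<dots> = (if t \<in> Z then 0 else 1)" using t by (simp add: sum.delta)
  finally show ?thesis .
qed

lemma sign_cone_face_point:
  "Z \<subseteq> {1..n} \<Longrightarrow> sign_cone n (face_point Z) = {x \<in> sign_cone n u. \<forall>t\<in>Z. ray_coeff t x = 0}"
  using sign_cone_of_member[OF face_point_in_sign_cone] ray_coeff_face_point by auto

lemma face_point_apply:
  "i < n \<Longrightarrow> face_point Z i = eps i * card ({1..abs_rank i} - Z)"
proof -
  assume i: "i < n"
  have "face_point Z i = (\<Sum>t\<in>{1..n} - Z. if t \<le> abs_rank i then eps i else 0)"
    unfolding face_point_def ray_def using i by simp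
  also have "\<dots> = (\<Sum>t\<in>({1..n} - Z) \<inter> {t. t \<le> abs_rank i}. eps i)"
    by (subst sum.inter_restrict) auto
  also have "({1..n} - Z) \<inter> {t. t \<le> abs_rank i} = {1..abs_rank i} - Z" using abs_rank_le[of i] by auto
  finally show ?thesis by simp
qed

lemma linear_form_ray_decomp:
  assumes x: "x \<in> Rn n"
  shows "(\<Sum>i<n. a i * x i) = (\<Sum>t\<in>{1..n}. ray_coeff t x * (\<Sum>i<n. a i * ray t i))"
proof -
  have "(\<Sum>i<n. a i * x i) = (\<Sum>i<n. a i * (\<Sum>t\<in>{1..n}. ray_coeff t x * ray t i))"
    by (subst ray_decomp[OF x]) simp
  also have "\<dots> = (\<Sum>i<n. \<Sum>t\<in>{1..n}. ray_coeff t x * (a i * ray t i))"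
    by (simp add: sum_distrib_left algebra_simps)
  also have "\<dots> = (\<Sum>t\<in>{1..n}. \<Sum>i<n. ray_coeff t x * (a i * ray t i))" by (rule sum.swap)
  also have "\<dots> = (\<Sum>t\<in>{1..n}. ray_coeff t x * (\<Sum>i<n. a i * ray t i))"
    by (simp add: sum_distrib_left)
  finally show ?thesis .
qed

lemma supporting_form_ray_nonpos:
  assumes sub: "sign_cone n u \<subseteq> {x. (\<Sum>i<n. a i * x i) \<le> b}" and t: "t \<in> {1..n}"
  shows "(\<Sum>i<n. a i * ray t i) \<le> 0"
proof (rule ccontr)
  define al where "al = (\<Sum>i<n. a i * ray t i)"
  assume "\<not> (\<Sum>i<n. a i * ray t i) \<le> 0"
  then have pos: "0 < al" by (simp add: al_def)
  have "(0::nat\<Rightarrow>real) \<in> {x. (\<Sum>i<n. a i * x i) \<le> b}" using sub zero_in_sign_cone by blast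
  then have "0 \<le> b" by simp
  define c where "c = (b + 1) / al"
  have c0: "0 \<le> c" using pos \<open>0 \<le> b\<close> by (simp add: c_def)
  have "(\<lambda>i. \<Sum>s\<in>{t}. c * ray s i) \<in> sign_cone n u"
    using c0 ray_in_sign_cone by (intro sign_cone_nonneg_comb) auto
  then have "(\<Sum>i<n. a i * (c * ray t i)) \<le> b" using sub by auto
  moreover have "(\<Sum>i<n. a i * (c * ray t i)) = c * al"
    by (simp add: al_def sum_distrib_left algebra_simps)
  moreover have "c * al = b + 1" using pos by (simp add: c_def)
  ultimately show False by simp
qed

lemma supporting_hyperplane_section:
  assumes sub: "sign_cone n u \<subseteq> {x. (\<Sum>i<n. a i * x i) \<le> b}"
    and ne: "sign_cone n u \<inter> {x \<in> Rn n. (\<Sum>i<n. a i * x i) = b} \<noteq> {}"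
  shows "sign_cone n u \<inter> {x \<in> Rn n. (\<Sum>i<n. a i * x i) = b} = sign_cone n (face_point {t\<in>{1..n}. (\<Sum>i<n. a i * ray t i) < 0})"
proof -
  define al where "al t = (\<Sum>i<n. a i * ray t i)" for t
  have "(0::nat\<Rightarrow>real) \<in> {x. (\<Sum>i<n. a i * x i) \<le> b}" using sub zero_in_sign_cone by blast
  then have b0: "0 \<le> b" by simp
  have al_le: "al t \<le> 0" if "t \<in> {1..n}" for t
    using supporting_form_ray_nonpos[OF sub that] by (simp add: al_def)
  have lin: "x \<in> sign_cone n u \<Longrightarrow> (\<Sum>i<n. a i * x i) = (\<Sum>t\<in>{1..n}. ray_coeff t x * al t)" for x
    using linear_form_ray_decomp[of x a] by (simp add: sign_cone_def al_def)
  have nonpos: "x \<in> sign_cone n u \<Longrightarrow> t \<in> {1..n} \<Longrightarrow> ray_coeff t x * al t \<le> 0" for x t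
    using sign_cone_eq al_le by (auto simp: mult_nonneg_nonpos)
  have b00: "b = 0"
  proof -
    obtain x where x: "x \<in> sign_cone n u" "(\<Sum>i<n. a i * x i) = b" using ne by auto
    have "(\<Sum>t\<in>{1..n}. ray_coeff t x * al t) \<le> 0" using nonpos[OF x(1)] by (intro sum_nonpos) auto
    then show ?thesis using x lin b0 by auto
  qed
  have "sign_cone n u \<inter> {x \<in> Rn n. (\<Sum>i<n. a i * x i) = b} = {x \<in> sign_cone n u. \<forall>t\<in>{t\<in>{1..n}. al t < 0}. ray_coeff t x = 0}"
  proof (intro set_eqI iffI)
    fix x assume x: "x \<in> sign_cone n u \<inter> {x \<in> Rn n. (\<Sum>i<n. a i * x i) = b}"
    then have xG: "x \<in> sign_cone n u" and xs: "(\<Sum>i<n. a i * x i) = b" by auto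
    then have "(\<Sum>t\<in>{1..n}. - (ray_coeff t x * al t)) = 0" using lin[OF xG] b00 by (simp add: sum_negf)
    then have "\<forall>t\<in>{1..n}. - (ray_coeff t x * al t) = 0"
      using sum_nonneg_eq_0_iff[of "{1..n}" "\<lambda>t. - (ray_coeff t x * al t)"] nonpos x by auto
    then show "x \<in> {x \<in> sign_cone n u. \<forall>t\<in>{t\<in>{1..n}. al t < 0}. ray_coeff t x = 0}" using x by auto
  next
    fix x assume x: "x \<in> {x \<in> sign_cone n u. \<forall>t\<in>{t\<in>{1..n}. al t < 0}. ray_coeff t x = 0}"
    then have "\<forall>t\<in>{1..n}. ray_coeff t x * al t = 0" using al_le by (metis (mono_tags, lifting) mem_Collect_eq mult_eq_0_iff order_less_le)
    moreover have xG: "x \<in> sign_cone n u" using x by simp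
    ultimately have "(\<Sum>i<n. a i * x i) = b" using lin[OF xG] b00 by (simp add: sum.neutral)
    then show "x \<in> sign_cone n u \<inter> {x \<in> Rn n. (\<Sum>i<n. a i * x i) = b}" using x by (auto simp: sign_cone_def)
  qed
  also have "\<dots> = sign_cone n (face_point {t\<in>{1..n}. al t < 0})" by (rule sign_cone_face_point[symmetric]) auto
  finally show ?thesis by (simp add: al_def)
qed

lemma ray_coeff_linear_form:
  "(\<Sum>i<n. ((if abs_rank i = t then eps i else 0) - (if abs_rank i = t - 1 then eps i else 0)) * x i) = ray_coeff t x"
  unfolding ray_coeff_def rank_coord_def sum_subtractf[symmetric]
  by (intro sum.cong refl) auto

lemma ray_coeff_sum_as_linear_form:
  assumes Z: "Z \<subseteq> {1..n}" "Z \<noteq> {}"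
  obtains a where "\<exists>i<n. a i \<noteq> 0" "\<And>x. (\<Sum>i<n. a i * x i) = - (\<Sum>t\<in>Z. ray_coeff t x)"
proof -
  define cf where "cf t i = ((if abs_rank i = t then eps i else 0) - (if abs_rank i = t - 1 then eps i else 0))" for t i
  define a where "a i = - (\<Sum>t\<in>Z. cf t i)" for i
  have finZ: "finite Z" using Z finite_subset by blast
  have lin: "(\<Sum>i<n. a i * x i) = - (\<Sum>t\<in>Z. ray_coeff t x)" for x
  proof -
    have "(\<Sum>i<n. a i * x i) = - (\<Sum>i<n. \<Sum>t\<in>Z. cf t i * x i)"
      by (simp add: a_def sum_distrib_right sum_negf)
    also have "\<dots> = - (\<Sum>t\<in>Z. \<Sum>i<n. cf t i * x i)" by (simp add: sum.swap[of _ "{..<n}"])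
    also have "\<dots> = - (\<Sum>t\<in>Z. ray_coeff t x)" using ray_coeff_linear_form by (simp add: cf_def)
    finally show ?thesis .
  qed
  define t0 where "t0 = Max Z"
  have t0: "t0 \<in> Z" using finZ Z by (simp add: t0_def)
  have t0m: "\<And>t. t \<in> Z \<Longrightarrow> t \<le> t0" using finZ by (simp add: t0_def)
  obtain i0 where i0: "i0 < n" "abs_rank i0 = t0" using abs_rank_surj t0 Z by blast
  have "(\<Sum>t\<in>Z. cf t i0) = (\<Sum>t\<in>Z. if t = t0 then eps i0 else 0)"
  proof (intro sum.cong refl)
    fix t assume t: "t \<in> Z"
    have "t0 \<noteq> t - 1 \<or> t0 = t" using t0m[OF t] Z t by force
    then show "cf t i0 = (if t = t0 then eps i0 else 0)" using i0 t0m[OF t] abs_rank_ge1[OF i0(1)] by (auto simp: cf_def)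
  qed
  also have "\<dots> = eps i0" using t0 finZ by (simp add: sum.delta')
  finally have "a i0 = - eps i0" by (simp add: a_def)
  then have "a i0 \<noteq> 0" using eps_cases[OF i0(1)] by auto
  then show thesis using that i0(1) lin by blast
qed

lemma exists_supporting_hyperplane:
  assumes Z: "Z \<subseteq> {1..n}" "Z \<noteq> {}"
  shows "\<exists>a. (\<exists>i<n. a i \<noteq> 0) \<and> sign_cone n u \<subseteq> {x. (\<Sum>i<n. a i * x i) \<le> 0} \<and>
     sign_cone n u \<inter> {x\<in>Rn n. (\<Sum>i<n. a i * x i) = 0} = {x\<in>sign_cone n u. \<forall>t\<in>Z. ray_coeff t x = 0}"
proof -
  obtain a where anz: "\<exists>i<n. a i \<noteq> 0" and lin: "\<And>x. (\<Sum>i<n. a i * x i) = - (\<Sum>t\<in>Z. ray_coeff t x)"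
    using ray_coeff_sum_as_linear_form[OF Z] by blast
  have finZ: "finite Z" using Z finite_subset by blast
  have nn: "x \<in> sign_cone n u \<Longrightarrow> t \<in> Z \<Longrightarrow> 0 \<le> ray_coeff t x" for x t using sign_cone_eq Z by blast
  have sub: "sign_cone n u \<subseteq> {x. (\<Sum>i<n. a i * x i) \<le> 0}"
  proof
    fix x assume x: "x \<in> sign_cone n u"
    have "0 \<le> (\<Sum>t\<in>Z. ray_coeff t x)" using nn[OF x] by (intro sum_nonneg) auto
    then show "x \<in> {x. (\<Sum>i<n. a i * x i) \<le> 0}" using lin[of x] by simp
  qed
  have eq: "sign_cone n u \<inter> {x\<in>Rn n. (\<Sum>i<n. a i * x i) = 0} = {x\<in>sign_cone n u. \<forall>t\<in>Z. ray_coeff t x = 0}"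
  proof (intro set_eqI iffI)
    fix x assume x: "x \<in> sign_cone n u \<inter> {x\<in>Rn n. (\<Sum>i<n. a i * x i) = 0}"
    then have xG: "x \<in> sign_cone n u" by simp
    have "(\<Sum>t\<in>Z. ray_coeff t x) = 0" using x lin[of x] by simp
    then have "\<forall>t\<in>Z. ray_coeff t x = 0" using sum_nonneg_eq_0_iff[OF finZ, of "\<lambda>t. ray_coeff t x"] nn[OF xG] by auto
    then show "x \<in> {x\<in>sign_cone n u. \<forall>t\<in>Z. ray_coeff t x = 0}" using xG by simp
  next
    fix x assume x: "x \<in> {x\<in>sign_cone n u. \<forall>t\<in>Z. ray_coeff t x = 0}"
    then have "(\<Sum>t\<in>Z. ray_coeff t x) = 0" by simp
    then show "x \<in> sign_cone n u \<inter> {x\<in>Rn n. (\<Sum>i<n. a i * x i) = 0}" using x lin[of x] by (auto simp: sign_cone_def)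
  qed
  show ?thesis using anz sub eq by blast
qed

end

lemma arr_complement_regular_point: assumes u: "u \<in> arr_complement n" shows "regular_point n u"
proof
  have uW: "u \<in> W0 n" using u arr_complement_iff by blast
  then show "u \<in> Rn n" by (simp add: W0_def)
  show "\<And>i. i < n \<Longrightarrow> u i \<noteq> 0" using u arr_complement_iff by blast
  show "\<bar>u i\<bar> \<noteq> \<bar>u j\<bar>" if "i < n" "j < n" "i \<noteq> j" for i j
  proof
    assume e: "\<bar>u i\<bar> = \<bar>u j\<bar>"
    have ne: "u i \<noteq> u j" using uW that by (auto simp: W0_def) (metis less_irrefl linorder_neqE_nat)
    have "u i + u j \<noteq> 0" using u arr_complement_iff that by (metis add.commute linorder_neqE_nat)
    then show False using e ne by (auto simp: abs_if split: if_splits)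
  qed
qed

section \<open>Faces and their integral representatives\<close>

lemma card_levels_below:
  fixes v :: "nat \<Rightarrow> real"
  assumes levels: "(\<lambda>j. \<bar>v j\<bar>) ` {j. j < n \<and> v j \<noteq> 0} = real ` {1..L}"
    and i: "i < n" and m: "\<bar>v i\<bar> = real m"
  shows "\<bar>v i\<bar> = card ((\<lambda>j. \<bar>v j\<bar>) ` {j. j < n \<and> v j \<noteq> 0 \<and> \<bar>v j\<bar> \<le> \<bar>v i\<bar>})"
proof -
  have "m \<le> L"
  proof (cases "v i = 0")
    case False
    then have "\<bar>v i\<bar> \<in> (\<lambda>j. \<bar>v j\<bar>) ` {j. j < n \<and> v j \<noteq> 0}" using i by blast
    then show ?thesis unfolding levels m by auto
  qed (use m in simp)
  have "(\<lambda>j. \<bar>v j\<bar>) ` {j. j < n \<and> v j \<noteq> 0 \<and> \<bar>v j\<bar> \<le> \<bar>v i\<bar>} =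
      {y \<in> (\<lambda>j. \<bar>v j\<bar>) ` {j. j < n \<and> v j \<noteq> 0}. y \<le> real m}"
    unfolding m by auto
  also have "\<dots> = real ` {1..m}"
    unfolding levels using \<open>m \<le> L\<close> by auto
  finally show ?thesis using m by (simp add: card_image)
qed

text \<open>The integral face representatives, and their numbers of levels, which are the
  dimensions of the faces they represent (lemma span_dim_face_rep).\<close>

definition face_reps :: "nat \<Rightarrow> (nat \<Rightarrow> real) set" where
  "face_reps n = {v \<in> Wc n. (\<forall>i<n. v i \<in> \<int>) \<and>
     (\<forall>i<n. \<forall>m::nat. 1 \<le> m \<and> real m \<le> \<bar>v i\<bar> \<longrightarrow> (\<exists>j<n. \<bar>v j\<bar> = real m))}"

lemma face_rep_Ints:
  "v \<in> face_reps n \<Longrightarrow> i < n \<Longrightarrow> v i \<in> \<int>"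
  unfolding face_reps_def by blast

definition num_levels :: "nat \<Rightarrow> (nat \<Rightarrow> real) \<Rightarrow> nat" where
  "num_levels n v = card ((\<lambda>i. \<bar>v i\<bar>) ` {i. i < n \<and> v i \<noteq> 0})"

lemma discrete_ivt:
  fixes h :: "nat \<Rightarrow> nat"
  assumes h0: "h 0 = 0" and hs: "\<And>s. h (Suc s) \<le> h s + 1" and m: "1 \<le> m" "m \<le> h r"
  shows "\<exists>s. 1 \<le> s \<and> s \<le> r \<and> h s = m"
  using m(2)
proof (induction r)
  case 0 then show ?case using h0 m(1) by simp
next
  case (Suc r)
  show ?case
  proof (cases "m \<le> h r")
    case True then show ?thesis using Suc.IH by (meson le_SucI)
  next
    case False
    then have "h (Suc r) = m" using Suc.prems hs[of r] by linarith
    then show ?thesis by auto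
  qed
qed

lemma card_jumps_eq_card_values:
  fixes L :: "nat \<Rightarrow> 'a::linorder"
  assumes step: "\<And>t. 0 < t \<Longrightarrow> t \<le> n \<Longrightarrow> L (t - 1) \<le> L t"
  shows "card {t\<in>{1..n}. L (t - 1) \<noteq> L t} = card (L ` {1..n} - {L 0})"
proof -
  define J where "J = {t\<in>{1..n}. L (t - 1) \<noteq> L t}"
  have mono: "L s \<le> L t" if "s \<le> t" "t \<le> n" for s t
    using that
  proof (induction t)
    case (Suc t)
    then show ?case using step[of "Suc t"] by (cases "s = Suc t") auto
  qed simp
  have jump: "L s < L t" if "s < t" "t \<in> J" for s t
  proof -
    have "L s \<le> L (t - 1)" using that by (intro mono) (auto simp: J_def)
    also have "L (t - 1) < L t" using that step[of t] by (simp add: J_def order.strict_iff_order)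
    finally show ?thesis .
  qed
  have "inj_on L J"
  proof (rule inj_onI)
    fix s t assume "s \<in> J" "t \<in> J" "L s = L t"
    then show "s = t" using jump[of s t] jump[of t s] by (cases s t rule: linorder_cases) auto
  qed
  moreover have "L ` J = L ` {1..n} - {L 0}"
  proof
    show "L ` J \<subseteq> L ` {1..n} - {L 0}"
    proof
      fix y assume "y \<in> L ` J"
      then obtain t where "t \<in> J" "y = L t" by blast
      moreover from this have "L 0 < L t" using jump[of 0 t] by (simp add: J_def)
      ultimately show "y \<in> L ` {1..n} - {L 0}" by (auto simp: J_def)
    qed
    show "L ` {1..n} - {L 0} \<subseteq> L ` J"
    proof
      fix y assume "y \<in> L ` {1..n} - {L 0}"
      then obtain s where s: "s \<in> {1..n}" "L s = y" "y \<noteq> L 0" by auto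
      define t where "t = (LEAST t. L t = y)"
      have t: "L t = y" "t \<le> s"
        using s LeastI[of "\<lambda>t. L t = y" s] Least_le[of "\<lambda>t. L t = y" s] by (simp_all add: t_def)
      then have "0 < t" using s by (cases t) auto
      moreover have "L (t - 1) \<noteq> y"
        using \<open>0 < t\<close> not_less_Least[of "t - 1" "\<lambda>t. L t = y"] by (simp add: t_def)
      ultimately have "t \<in> J" using t s by (auto simp: J_def)
      then show "y \<in> L ` J" using t by blast
    qed
  qed
  ultimately have "bij_betw L J (L ` {1..n} - {L 0})" by (simp add: bij_betw_def)
  then show ?thesis by (simp add: J_def bij_betw_same_card)
qed

context regular_point
begin

lemma face_point_in_face_reps:
  assumes uW: "u \<in> Wc n"
  shows "face_point Z \<in> face_reps n"
proof -
  have W: "face_point Z \<in> Wc n" using sign_cone_subset_Wc[OF uW] face_point_in_sign_cone by blast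
  have I: "face_point Z i \<in> \<int>" if "i < n" for i
  proof -
    have "real (card ({1..abs_rank i} - Z)) \<in> \<int>" by (rule Ints_of_nat)
    then show ?thesis using eps_cases[OF that] face_point_apply[OF that] by (metis Ints_minus mult_1 mult_minus_left)
  qed
  have abs_w: "\<bar>face_point Z i\<bar> = card ({1..abs_rank i} - Z)" if "i < n" for i
  proof -
    have "\<bar>eps i\<bar> = 1" using eps_cases[OF that] by auto
    then show ?thesis using face_point_apply[OF that] by (simp add: abs_mult)
  qed
  have D: "\<exists>j<n. \<bar>face_point Z j\<bar> = real m" if i: "i < n" and m: "1 \<le> m" "real m \<le> \<bar>face_point Z i\<bar>" for i m
  proof -
    define h where "h s = card ({1..s} - Z)" for s
    have h0: "h 0 = 0" by (simp add: h_def)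
    have hs: "h (Suc s) \<le> h s + 1" for s
    proof -
      have "{1..Suc s} - Z \<subseteq> insert (Suc s) ({1..s} - Z)" by auto
      then have "card ({1..Suc s} - Z) \<le> card (insert (Suc s) ({1..s} - Z))" by (intro card_mono) auto
      also have "\<dots> \<le> card ({1..s} - Z) + 1" by (simp add: card_insert_if)
      finally show ?thesis by (simp add: h_def)
    qed
    have "m \<le> h (abs_rank i)" using m abs_w[OF i] by (simp add: h_def)
    then obtain s where s: "1 \<le> s" "s \<le> abs_rank i" "h s = m" using discrete_ivt[OF h0 hs m(1)] by blast
    have "s \<in> {1..n}" using s abs_rank_le[of i] by auto
    then obtain j where j: "j < n" "abs_rank j = s" using abs_rank_surj by blast
    show ?thesis using j s abs_w[OF j(1)] by (auto simp: h_def)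
  qed
  show ?thesis unfolding face_reps_def using W I D by blast
qed

lemma eps_mult_member:
  "v \<in> sign_cone n u \<Longrightarrow> i < n \<Longrightarrow> eps i * v i = \<bar>v i\<bar>"
proof -
  assume v: "v \<in> sign_cone n u" and i: "i < n"
  have "sign_compat (eps i * u i) (eps i * v i)" using sign_cone_signed1[OF v i eps_cases[OF i]] .
  moreover have "0 < eps i * u i" using u_nonzero[OF i] by (simp add: eps_mult_u)
  ultimately have "0 \<le> eps i * v i" unfolding sign_compat_def by auto
  then show ?thesis using eps_cases[OF i] by auto
qed

lemma card_ray_coeff_nonzero:
  assumes v: "v \<in> sign_cone n u"
  shows "card {t\<in>{1..n}. ray_coeff t v \<noteq> 0} = num_levels n v"
proof -
  let ?L = "\<lambda>t. rank_coord t v"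
  have "{t\<in>{1..n}. ray_coeff t v \<noteq> 0} = {t\<in>{1..n}. ?L (t - 1) \<noteq> ?L t}"
    by (auto simp: ray_coeff_def)
  moreover have "?L (t - 1) \<le> ?L t" if "0 < t" "t \<le> n" for t
    using ray_coeff_nonneg[OF v, of t] that by (simp add: ray_coeff_def)
  ultimately have "card {t\<in>{1..n}. ray_coeff t v \<noteq> 0} = card (?L ` {1..n} - {?L 0})"
    using card_jumps_eq_card_values[of n ?L] by simp
  also have "?L ` {1..n} = (\<lambda>i. \<bar>v i\<bar>) ` {..<n}"
    unfolding abs_rank_image[symmetric] image_image
    using rank_coord_abs_rank eps_mult_member[OF v] by (intro image_cong) auto
  also have "(\<lambda>i. \<bar>v i\<bar>) ` {..<n} - {?L 0} = (\<lambda>i. \<bar>v i\<bar>) ` {i. i < n \<and> v i \<noteq> 0}"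
    by (auto simp: rank_coord_0)
  finally show ?thesis by (simp add: num_levels_def)
qed

end

text \<open>Adding to an integer point of face_reps n offsets that decrease strictly in i and stay
  below 1/4 yields a point of the arrangement complement without changing any nonzero sign of
  x_i \<plusminus> x_j.\<close>

definition perturb :: "nat \<Rightarrow> (nat \<Rightarrow> real) \<Rightarrow> nat \<Rightarrow> real" where
  "perturb n v = (\<lambda>i. if i < n then v i + real (n - i) / real (4 * n) else 0)"

lemma perturb_offset_bounds:
  assumes "i < n"
  shows "0 < real (n - i) / real (4 * n)" "real (n - i) / real (4 * n) \<le> 1/4"
  using assms by (auto simp: field_simps)

lemma perturb_offset_strict_mono:
  assumes "i < j" "j < n"
  shows "real (n - j) / real (4 * n) < real (n - i) / real (4 * n)"
  using assms by (simp add: divide_strict_right_mono)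

lemma sign_compat_perturb:
  "1 \<le> \<bar>A::real\<bar> \<Longrightarrow> \<bar>D\<bar> \<le> 1/2 \<Longrightarrow> sign_compat (A + D) A"
  unfolding sign_compat_def by (auto simp: abs_if split: if_splits)

lemma perturb_apply: "i < n \<Longrightarrow> perturb n v i = v i + real (n - i) / real (4 * n)"
  by (simp add: perturb_def)

lemma perturb_arr_complement:
  assumes v: "v \<in> face_reps n"
  shows "perturb n v \<in> arr_complement n"
proof -
  define d where "d i = real (n - i) / real (4 * n)" for i
  have vW: "v \<in> Wc n" and vI: "\<And>i. i < n \<Longrightarrow> v i \<in> \<int>" using v by (auto simp: face_reps_def)
  have pv: "i < n \<Longrightarrow> perturb n v i = v i + d i" for i by (simp add: perturb_apply d_def)
  have dpos: "i < n \<Longrightarrow> 0 < d i" and dle: "i < n \<Longrightarrow> d i \<le> 1/4" for i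
    using perturb_offset_bounds by (auto simp: d_def)
  have "perturb n v j < perturb n v i" if ij: "i < j" "j < n" for i j
  proof -
    have "v j \<le> v i" using vW ij by (auto simp: Wc_def)
    moreover have "v i - v j \<in> \<int>" using vI ij by auto
    ultimately have "v i = v j \<or> 1 \<le> v i - v j" using Ints_nonzero_abs_ge1[of "v i - v j"] by auto
    then show ?thesis using pv ij perturb_offset_strict_mono[OF ij] dpos dle by (auto simp: d_def)
  qed
  then have "perturb n v \<in> W0 n" by (simp add: W0_def Rn_def perturb_def)
  moreover have "perturb n v i \<noteq> 0" if i: "i < n" for i
  proof -
    have "v i = 0 \<or> 1 \<le> \<bar>v i\<bar>" using Ints_nonzero_abs_ge1 vI[OF i] by auto
    then show ?thesis using pv[OF i] dpos[OF i] dle[OF i] by auto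
  qed
  moreover have "perturb n v i + perturb n v j \<noteq> 0" if ij: "i < j" "j < n" for i j
  proof -
    have i: "i < n" using ij by simp
    have "v i + v j = 0 \<or> 1 \<le> \<bar>v i + v j\<bar>"
      using Ints_nonzero_abs_ge1[of "v i + v j"] vI[OF i] vI[OF ij(2)] by auto
    then show ?thesis using pv[OF i] pv[OF ij(2)] dpos[OF i] dle[OF i] dpos[OF ij(2)] dle[OF ij(2)]
      by auto
  qed
  ultimately show ?thesis using arr_complement_iff by blast
qed

lemma in_sign_cone_perturb:
  assumes v: "v \<in> face_reps n"
  shows "v \<in> sign_cone n (perturb n v)"
proof -
  have vI: "\<And>i. i < n \<Longrightarrow> v i \<in> \<int>" using v by (auto simp: face_reps_def)
  have c: "sign_compat (perturb n v i - e * perturb n v j) (v i - e * v j)"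
    if ij: "i < n" "j < n" "e = 1 \<or> e = -1" for i j e
  proof (cases "v i - e * v j = 0")
    case False
    define di dj where "di = real (n - i) / real (4 * n)" and "dj = real (n - j) / real (4 * n)"
    define D where "D = di - e * dj"
    have "v i - e * v j \<in> \<int>" using vI ij by auto
    then have "1 \<le> \<bar>v i - e * v j\<bar>" using Ints_nonzero_abs_ge1 False by blast
    moreover have "\<bar>D\<bar> \<le> 1/2"
      using perturb_offset_bounds[OF ij(1)] perturb_offset_bounds[OF ij(2)] ij(3)
      unfolding di_def[symmetric] dj_def[symmetric] by (auto simp: D_def abs_if)
    moreover have "perturb n v i - e * perturb n v j = (v i - e * v j) + D"
      using ij by (simp add: perturb_apply D_def di_def dj_def algebra_simps)
    ultimately show ?thesis by (simp add: sign_compat_perturb)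
  qed simp
  moreover have "v \<in> Rn n" using v by (simp add: face_reps_def Wc_def)
  ultimately show ?thesis using c[of _ _ 1] c[of _ _ "-1"] by (simp add: sign_cone_def)
qed

lemma faces_subset: "faces n \<subseteq> sign_cone n ` face_reps n"
proof
  fix F assume "F \<in> faces n"
  then consider "F \<in> chambers n" | C H where "F = C \<inter> H" "C \<in> chambers n" "supporting_hyperplane n C H"
    unfolding faces_def by blast
  then show "F \<in> sign_cone n ` face_reps n"
  proof cases
    case 1
    then obtain u where u: "u \<in> arr_complement n" "F = sign_cone n u" using chambers_eq by blast
    interpret regular_point n u using arr_complement_regular_point[OF u(1)] .
    have "sign_cone n (face_point {}) = sign_cone n u" using sign_cone_face_point[of "{}"] by simp
    then show ?thesis using face_point_in_face_reps[OF arr_complement_Wc[OF u(1)]] u by (metis image_eqI)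
  next
    case 2
    then obtain u where u: "u \<in> arr_complement n" "C = sign_cone n u" using chambers_eq by blast
    interpret regular_point n u using arr_complement_regular_point[OF u(1)] .
    obtain a b where ab: "H = {x \<in> Rn n. (\<Sum>i<n. a i * x i) = b}"
      "C \<subseteq> {x. (\<Sum>i<n. a i * x i) \<le> b}" "C \<inter> H \<noteq> {}"
      using 2(3) unfolding supporting_hyperplane_def by blast
    have "F = sign_cone n (face_point {t\<in>{1..n}. (\<Sum>i<n. a i * ray t i) < 0})"
      using supporting_hyperplane_section[of a b] ab u 2(1) by simp
    then show ?thesis using face_point_in_face_reps[OF arr_complement_Wc[OF u(1)]] by blast
  qed
qed

lemma faces_supset: "sign_cone n ` face_reps n \<subseteq> faces n"
proof
  fix F assume "F \<in> sign_cone n ` face_reps n"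
  then obtain v where v: "v \<in> face_reps n" "F = sign_cone n v" by auto
  define u where "u = perturb n v"
  have u: "u \<in> arr_complement n" "v \<in> sign_cone n u" using perturb_arr_complement[OF v(1)] in_sign_cone_perturb[OF v(1)] by (simp_all add: u_def)
  interpret regular_point n u using arr_complement_regular_point[OF u(1)] .
  define Z where "Z = {t\<in>{1..n}. ray_coeff t v = 0}"
  have Fe: "F = {x \<in> sign_cone n u. \<forall>t\<in>Z. ray_coeff t x = 0}" using sign_cone_of_member[OF u(2)] v(2) by (auto simp: Z_def)
  have ch: "sign_cone n u \<in> chambers n" using chambers_eq u(1) by blast
  show "F \<in> faces n"
  proof (cases "Z = {}")
    case True
    then have "F = sign_cone n u" using Fe by simp
    then show ?thesis using ch by (simp add: faces_def)
  next
    case False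
    obtain a where a: "\<exists>i<n. a i \<noteq> 0" "sign_cone n u \<subseteq> {x. (\<Sum>i<n. a i * x i) \<le> 0}"
      "sign_cone n u \<inter> {x\<in>Rn n. (\<Sum>i<n. a i * x i) = 0} = {x\<in>sign_cone n u. \<forall>t\<in>Z. ray_coeff t x = 0}"
    proof -
      have "Z \<subseteq> {1..n}" by (auto simp: Z_def)
      from exists_supporting_hyperplane[OF this False] show ?thesis using that by blast
    qed
    have "supporting_hyperplane n (sign_cone n u) {x\<in>Rn n. (\<Sum>i<n. a i * x i) = 0}"
    proof -
      have "(0::nat\<Rightarrow>real) \<in> sign_cone n u \<inter> {x\<in>Rn n. (\<Sum>i<n. a i * x i) = 0}" by simp
      then show ?thesis unfolding supporting_hyperplane_def using a(1,2)
        by (intro exI[of _ a] exI[of _ 0]) blast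
    qed
    then show ?thesis using ch a(3) Fe unfolding faces_def by blast
  qed
qed

lemma faces_eq: "faces n = sign_cone n ` face_reps n"
  using faces_subset faces_supset by blast

lemma span_dim_face_rep:
  assumes v: "v \<in> face_reps n"
  shows "span_dim (sign_cone n v) = num_levels n v"
proof -
  have u: "perturb n v \<in> arr_complement n" "v \<in> sign_cone n (perturb n v)" using perturb_arr_complement[OF v] in_sign_cone_perturb[OF v] by simp_all
  interpret regular_point n "perturb n v" using arr_complement_regular_point[OF u(1)] .
  show ?thesis using span_dim_sign_cone[OF u(2)] card_ray_coeff_nonzero[OF u(2)] by simp
qed

lemma abs_le_sgn:
  "\<bar>b::real\<bar> \<le> \<bar>a\<bar> \<longleftrightarrow> 0 \<le> sgn (a - b) * sgn (a + b)"
proof -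
  have "\<bar>b\<bar> \<le> \<bar>a\<bar> \<longleftrightarrow> b^2 \<le> a^2" by (simp add: abs_le_square_iff)
  also have "\<dots> \<longleftrightarrow> 0 \<le> (a - b) * (a + b)" by (simp add: algebra_simps power2_eq_square)
  also have "\<dots> \<longleftrightarrow> 0 \<le> sgn ((a - b) * (a + b))" by (simp add: sgn_if)
  also have "sgn ((a - b) * (a + b)) = sgn (a - b) * sgn (a + b)" by (rule sgn_mult)
  finally show ?thesis .
qed

lemma abs_eq_sgn:
  "\<bar>b::real\<bar> = \<bar>a\<bar> \<longleftrightarrow> sgn (a - b) * sgn (a + b) = 0"
proof -
  have "\<bar>b\<bar> = \<bar>a\<bar> \<longleftrightarrow> (a - b) * (a + b) = 0"
    by (auto simp: abs_eq_iff algebra_simps) (metis add.inverse_inverse add_eq_0_iff2 eq_iff_diff_eq_0 mult_eq_0_iff square_diff_square_factored)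
  also have "\<dots> \<longleftrightarrow> sgn ((a - b) * (a + b)) = 0" by (simp only: sgn_eq_0_iff)
  also have "sgn ((a - b) * (a + b)) = sgn (a - b) * sgn (a + b)" by (rule sgn_mult)
  finally show ?thesis .
qed

lemma card_image_kernel:
  assumes "\<And>j k. j \<in> J \<Longrightarrow> k \<in> J \<Longrightarrow> f j = f k \<longleftrightarrow> gg j = gg k"
  shows "card (f ` J) = card (gg ` J)"
proof -
  define h where "h y = f (inv_into J gg y)" for y
  have hg: "j \<in> J \<Longrightarrow> h (gg j) = f j" for j
  proof -
    assume j: "j \<in> J"
    have "gg j \<in> gg ` J" using j by simp
    then have "inv_into J gg (gg j) \<in> J" "gg (inv_into J gg (gg j)) = gg j"
      by (auto intro: inv_into_into f_inv_into_f)
    then show ?thesis using assms j by (simp add: h_def)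
  qed
  have "h ` (gg ` J) = f ` J" using hg by (auto simp: image_iff)
  moreover have "inj_on h (gg ` J)"
  proof (rule inj_onI)
    fix y z assume "y \<in> gg ` J" "z \<in> gg ` J" "h y = h z"
    then obtain j k where "j \<in> J" "k \<in> J" "y = gg j" "z = gg k" "f j = f k" using hg by auto
    then show "y = z" using assms by auto
  qed
  ultimately show ?thesis using card_image by metis
qed

lemma face_rep_of_int_floor:
  "v \<in> face_reps n \<Longrightarrow> i < n \<Longrightarrow> real_of_int \<lfloor>v i\<rfloor> = v i"
  unfolding face_reps_def by (auto elim!: Ints_cases)

lemma face_rep_abs_nat:
  assumes "v \<in> face_reps n" "i < n"
  shows "\<exists>m::nat. \<bar>v i\<bar> = real m"
proof -
  obtain z where "v i = of_int z" using face_rep_Ints[OF assms] by (rule Ints_cases)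
  then have "\<bar>v i\<bar> = real (nat \<bar>z\<bar>)" by simp
  then show ?thesis by blast
qed

lemma face_rep_levels:
  assumes v: "v \<in> face_reps n"
  shows "(\<lambda>i. \<bar>v i\<bar>) ` {i. i < n \<and> v i \<noteq> 0} = real ` {1..num_levels n v}"
proof -
  define V where "V = (\<lambda>i. \<bar>v i\<bar>) ` {i. i < n \<and> v i \<noteq> 0}"
  have finV: "finite V" unfolding V_def by (rule finite_imageI) (rule finite_subset[of _ "{..<n}"], auto)
  have "\<exists>m. V = real ` {1..m}"
  proof (cases "V = {}")
    case True then show ?thesis by (intro exI[of _ 0]) simp
  next
    case False
    define M where "M = Max V"
    have MV: "M \<in> V" using finV False by (simp add: M_def)
    then obtain i0 where i0: "i0 < n" "v i0 \<noteq> 0" "M = \<bar>v i0\<bar>" by (auto simp: V_def)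
    obtain m :: nat where m: "M = real m" using face_rep_abs_nat[OF v i0(1)] i0 by auto
    have "V = real ` {1..m}"
    proof
      show "V \<subseteq> real ` {1..m}"
      proof
        fix y assume y: "y \<in> V"
        then obtain i where i: "i < n" "v i \<noteq> 0" "y = \<bar>v i\<bar>" by (auto simp: V_def)
        obtain k :: nat where k: "\<bar>v i\<bar> = real k" using face_rep_abs_nat[OF v i(1)] by auto
        have "1 \<le> k" using k i(2) by (cases k) auto
        moreover have "y \<le> M" using y finV by (simp add: M_def)
        ultimately show "y \<in> real ` {1..m}" using i k m by auto
      qed
      show "real ` {1..m} \<subseteq> V"
      proof
        fix y assume "y \<in> real ` {1..m}"
        then obtain k where k: "1 \<le> k" "k \<le> m" "y = real k" by auto
        have "real k \<le> \<bar>v i0\<bar>" using k m i0 by simp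
        then obtain j where j: "j < n" "\<bar>v j\<bar> = real k" using v i0(1) k(1) unfolding face_reps_def by blast
        then show "y \<in> V" using k by (auto simp: V_def intro!: image_eqI[of _ _ j])
      qed
    qed
    then show ?thesis by blast
  qed
  then obtain m where m: "V = real ` {1..m}" by blast
  have "num_levels n v = m" using m by (simp add: num_levels_def V_def[symmetric] card_image)
  then show ?thesis using m by (simp add: V_def)
qed

lemma face_rep_levels_below:
  assumes v: "v \<in> face_reps n" and i: "i < n"
  shows "\<bar>v i\<bar> = card ((\<lambda>j. \<bar>v j\<bar>) ` {j. j < n \<and> v j \<noteq> 0 \<and> \<bar>v j\<bar> \<le> \<bar>v i\<bar>})"
proof -
  obtain m :: nat where "\<bar>v i\<bar> = real m" using face_rep_abs_nat[OF v i] by blast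
  then show ?thesis by (rule card_levels_below[OF face_rep_levels[OF v] i])
qed

lemma face_reps_eq_if_same_signs:
  assumes v: "v \<in> face_reps n" and w: "w \<in> face_reps n"
    and p: "\<And>i j. i < n \<Longrightarrow> j < n \<Longrightarrow> sgn (v i - v j) = sgn (w i - w j) \<and> sgn (v i + v j) = sgn (w i + w j)"
  shows "v = w"
proof
  fix i
  show "v i = w i"
  proof (cases "i < n")
    case False
    then show ?thesis using v w by (auto simp: face_reps_def Wc_def Rn_def)
  next
    case True
    define J where "J = {j. j < n \<and> v j \<noteq> 0 \<and> \<bar>v j\<bar> \<le> \<bar>v i\<bar>}"
    have nz: "j < n \<Longrightarrow> v j \<noteq> 0 \<longleftrightarrow> w j \<noteq> 0" for j
      using p[of j j] by (auto simp: sgn_if split: if_splits)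
    have le: "j < n \<Longrightarrow> \<bar>v j\<bar> \<le> \<bar>v i\<bar> \<longleftrightarrow> \<bar>w j\<bar> \<le> \<bar>w i\<bar>" for j
      using p[OF True, of j] abs_le_sgn[of "v j" "v i"] abs_le_sgn[of "w j" "w i"] by simp
    have J: "J = {j. j < n \<and> w j \<noteq> 0 \<and> \<bar>w j\<bar> \<le> \<bar>w i\<bar>}" using nz le by (auto simp: J_def)
    have ker: "j \<in> J \<Longrightarrow> k \<in> J \<Longrightarrow> \<bar>v j\<bar> = \<bar>v k\<bar> \<longleftrightarrow> \<bar>w j\<bar> = \<bar>w k\<bar>" for j k
      using p[of k j] abs_eq_sgn[of "v j" "v k"] abs_eq_sgn[of "w j" "w k"] by (auto simp: J_def)
    have "\<bar>v i\<bar> = card ((\<lambda>j. \<bar>v j\<bar>) ` J)" using face_rep_levels_below[OF v True] by (simp add: J_def)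
    also have "card ((\<lambda>j. \<bar>v j\<bar>) ` J) = card ((\<lambda>j. \<bar>w j\<bar>) ` J)" by (rule card_image_kernel) (rule ker)
    also have "\<dots> = \<bar>w i\<bar>" using face_rep_levels_below[OF w True] by (simp add: J)
    finally have a: "\<bar>v i\<bar> = \<bar>w i\<bar>" .
    have "sgn (v i + v i) = sgn (w i + w i)" using p[OF True True] by simp
    then have "sgn (v i) = sgn (w i)" by (simp add: sgn_mult[of 2, simplified mult_2[symmetric]] mult_2[symmetric])
    then show ?thesis using a by (metis sgn_mult_abs)
  qed
qed

lemma inj_on_sign_cone: "inj_on (sign_cone n) (face_reps n)"
proof (rule inj_onI)
  fix v w assume v: "v \<in> face_reps n" and w: "w \<in> face_reps n" and e: "sign_cone n v = sign_cone n w"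
  have vR: "v \<in> Rn n" and wR: "w \<in> Rn n" using v w by (auto simp: face_reps_def Wc_def)
  have vw: "v \<in> sign_cone n w" using in_own_sign_cone[OF vR] e by simp
  have wv: "w \<in> sign_cone n v" using in_own_sign_cone[OF wR] e by simp
  show "v = w"
  proof (rule face_reps_eq_if_same_signs[OF v w])
    fix i j assume ij: "i < n" "j < n"
    have "sign_compat (v i - v j) (w i - w j)" "sign_compat (w i - w j) (v i - v j)"
      "sign_compat (v i + v j) (w i + w j)" "sign_compat (w i + w j) (v i + v j)"
      using vw wv ij by (auto simp: sign_cone_def)
    then show "sgn (v i - v j) = sgn (w i - w j) \<and> sgn (v i + v j) = sgn (w i + w j)"
      using sign_compat_antisym by blast
  qed
qed

lemma g_eq_card_face_reps: "g n k = card {v \<in> face_reps n. num_levels n v = k}"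
proof -
  have "{F \<in> faces n. span_dim F = k} = sign_cone n ` {v \<in> face_reps n. num_levels n v = k}"
    unfolding faces_eq using span_dim_face_rep by auto
  moreover have "inj_on (sign_cone n) {v \<in> face_reps n. num_levels n v = k}"
    using inj_on_sign_cone by (rule inj_on_subset) auto
  ultimately show ?thesis unfolding g_def by (simp add: card_image)
qed

section \<open>Counting representatives by multisets\<close>

text \<open>The multisets of coordinates of the points in face_reps n with k levels.\<close>

definition level_msets :: "nat \<Rightarrow> nat \<Rightarrow> int multiset set" where
  "level_msets n k = {M. size M = n \<and> (\<forall>x\<in>#M. \<bar>x\<bar> \<le> int k) \<and>
     (\<forall>m. 1 \<le> m \<and> m \<le> k \<longrightarrow> int m \<in># M \<or> - int m \<in># M)}"

definition coord_list :: "nat \<Rightarrow> (nat \<Rightarrow> real) \<Rightarrow> int list" where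
  "coord_list n v = map (\<lambda>i. \<lfloor>v i\<rfloor>) [0..<n]"

lemma coord_list_nth: "i < n \<Longrightarrow> coord_list n v ! i = \<lfloor>v i\<rfloor>"
  by (simp add: coord_list_def)

lemma length_coord_list[simp]: "length (coord_list n v) = n"
  by (simp add: coord_list_def)

lemma sorted_rev_coord_list: "v \<in> face_reps n \<Longrightarrow> sorted (rev (coord_list n v))"
  unfolding sorted_rev_iff_nth_mono
  by (auto simp: coord_list_nth face_reps_def Wc_def intro: floor_mono)

lemma coord_list_level_msets:
  assumes v: "v \<in> face_reps n"
  shows "mset (coord_list n v) \<in> level_msets n (num_levels n v)"
proof -
  have V: "(\<lambda>i. \<bar>v i\<bar>) ` {i. i < n \<and> v i \<noteq> 0} = real ` {1..num_levels n v}" using face_rep_levels[OF v] .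
  have "\<bar>x\<bar> \<le> int (num_levels n v)" if "x \<in># mset (coord_list n v)" for x
  proof -
    have "x \<in> set (coord_list n v)" using that by simp
    then obtain i where i: "i < n" "x = \<lfloor>v i\<rfloor>" unfolding coord_list_def by auto
    have vi: "v i = real_of_int x" unfolding i(2) using face_rep_of_int_floor[OF v i(1)] by (rule sym)
    show ?thesis
    proof (cases "v i = 0")
      case True then show ?thesis using vi by simp
    next
      case False
      then have "\<bar>v i\<bar> \<in> real ` {1..num_levels n v}" using V[symmetric] i by blast
      then have "\<bar>v i\<bar> \<le> real (num_levels n v)" by auto
      then have "real_of_int \<bar>x\<bar> \<le> real_of_int (int (num_levels n v))" using vi by simp
      then show ?thesis by (simp only: of_int_le_iff)
    qed
  qed
  moreover have "int m \<in># mset (coord_list n v) \<or> - int m \<in># mset (coord_list n v)" if m: "1 \<le> m" "m \<le> num_levels n v" for m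
  proof -
    have "real m \<in> real ` {1..num_levels n v}" using m by auto
    then have "real m \<in> (\<lambda>i. \<bar>v i\<bar>) ` {i. i < n \<and> v i \<noteq> 0}" using V by simp
    then obtain i where i: "i < n" "\<bar>v i\<bar> = real m" by auto
    have "v i = real m \<or> v i = - real m" using i(2) by (cases "0 \<le> v i") auto
    then have "\<lfloor>v i\<rfloor> = int m \<or> \<lfloor>v i\<rfloor> = - int m"
    proof
      assume "v i = real m" then show ?thesis by simp
    next
      assume "v i = - real m"
      then have "v i = real_of_int (- int m)" by simp
      then have "\<lfloor>v i\<rfloor> = - int m" by (simp only: floor_of_int)
      then show ?thesis by simp
    qed
    moreover have "\<lfloor>v i\<rfloor> \<in># mset (coord_list n v)" using i by (auto simp: coord_list_def)
    ultimately show ?thesis by auto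
  qed
  ultimately show ?thesis by (auto simp: level_msets_def coord_list_def)
qed

lemma inj_on_mset_coord_list: "inj_on (\<lambda>v. mset (coord_list n v)) (face_reps n)"
proof (rule inj_onI)
  fix v w assume v: "v \<in> face_reps n" and w: "w \<in> face_reps n" and e: "mset (coord_list n v) = mset (coord_list n w)"
  have "sort (rev (coord_list n w)) = rev (coord_list n v)"
    by (rule properties_for_sort) (use e sorted_rev_coord_list[OF v] in auto)
  moreover have "sort (rev (coord_list n w)) = rev (coord_list n w)" using sorted_rev_coord_list[OF w] by (rule sorted_sort_id)
  ultimately have L: "coord_list n v = coord_list n w" by simp
  show "v = w"
  proof
    fix i show "v i = w i"
    proof (cases "i < n")
      case True
      then have "\<lfloor>v i\<rfloor> = \<lfloor>w i\<rfloor>" using L coord_list_nth by metis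
      then show ?thesis using face_rep_of_int_floor[OF v True] face_rep_of_int_floor[OF w True] by metis
    next
      case False then show ?thesis using v w by (auto simp: face_reps_def Wc_def Rn_def)
    qed
  qed
qed

definition list_point :: "nat \<Rightarrow> int list \<Rightarrow> nat \<Rightarrow> real" where
  "list_point n xs = (\<lambda>i. if i < n then real_of_int (xs ! i) else 0)"

lemma coord_list_list_point: "length xs = n \<Longrightarrow> coord_list n (list_point n xs) = xs"
  by (intro nth_equalityI) (auto simp: coord_list_nth list_point_def)

lemma list_point_levels:
  assumes len: "length xs = n" and M: "mset xs \<in> level_msets n k"
  shows "(\<lambda>i. \<bar>list_point n xs i\<bar>) ` {i. i < n \<and> list_point n xs i \<noteq> 0} = real ` {1..k}"
proof
  have bound: "\<bar>xs ! i\<bar> \<le> int k" if "i < n" for i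
    using M len that by (auto simp: level_msets_def)
  show "(\<lambda>i. \<bar>list_point n xs i\<bar>) ` {i. i < n \<and> list_point n xs i \<noteq> 0} \<subseteq> real ` {1..k}"
  proof
    fix y assume "y \<in> (\<lambda>i. \<bar>list_point n xs i\<bar>) ` {i. i < n \<and> list_point n xs i \<noteq> 0}"
    then obtain i where i: "i < n" "xs ! i \<noteq> 0" "y = real_of_int \<bar>xs ! i\<bar>"
      by (auto simp: list_point_def)
    have "y = real (nat \<bar>xs ! i\<bar>)" using i by simp
    moreover have "nat \<bar>xs ! i\<bar> \<in> {1..k}" using i bound[OF i(1)] by auto
    ultimately show "y \<in> real ` {1..k}" by blast
  qed
  show "real ` {1..k} \<subseteq> (\<lambda>i. \<bar>list_point n xs i\<bar>) ` {i. i < n \<and> list_point n xs i \<noteq> 0}"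
  proof
    fix y assume "y \<in> real ` {1..k}"
    then obtain m where m: "1 \<le> m" "m \<le> k" "y = real m" by auto
    then have "int m \<in> set xs \<or> - int m \<in> set xs" using M by (auto simp: level_msets_def)
    then obtain j where j: "j < n" "xs ! j = int m \<or> xs ! j = - int m"
      using len by (auto simp: in_set_conv_nth)
    then have "list_point n xs j \<noteq> 0" "\<bar>list_point n xs j\<bar> = y" using m by (auto simp: list_point_def)
    then show "y \<in> (\<lambda>i. \<bar>list_point n xs i\<bar>) ` {i. i < n \<and> list_point n xs i \<noteq> 0}"
      using j by auto
  qed
qed

lemma list_point_in_face_reps:
  assumes len: "length xs = n" and sorted: "sorted (rev xs)" and M: "mset xs \<in> level_msets n k"
  shows "list_point n xs \<in> face_reps n"
proof -
  let ?v = "list_point n xs"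
  have "?v \<in> Wc n"
    using sorted_rev_nth_mono[OF sorted] len by (auto simp: Wc_def Rn_def list_point_def)
  moreover have "\<exists>j<n. \<bar>?v j\<bar> = real m" if i: "i < n" and m: "1 \<le> m" "real m \<le> \<bar>?v i\<bar>" for i m
  proof -
    have "\<bar>?v i\<bar> \<in> real ` {1..k}" using list_point_levels[OF len M] i m by fastforce
    with m have "real m \<in> real ` {1..k}" by auto
    then have "real m \<in> (\<lambda>i. \<bar>?v i\<bar>) ` {i. i < n \<and> ?v i \<noteq> 0}"
      by (simp only: list_point_levels[OF len M])
    then show ?thesis by fastforce
  qed
  ultimately show ?thesis by (auto simp: face_reps_def list_point_def)
qed

lemma level_msets_coord_list:
  assumes M: "M \<in> level_msets n k"
  shows "\<exists>v\<in>face_reps n. num_levels n v = k \<and> mset (coord_list n v) = M"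
proof -
  define xs where "xs = rev (sorted_list_of_multiset M)"
  have len: "length xs = n" using M by (simp add: xs_def level_msets_def flip: size_mset)
  have mxs: "mset xs = M" by (simp add: xs_def)
  have "list_point n xs \<in> face_reps n"
    using M mxs by (intro list_point_in_face_reps[OF len]) (simp_all add: xs_def)
  moreover have "num_levels n (list_point n xs) = k"
    using list_point_levels[OF len] M mxs by (simp add: num_levels_def card_image)
  ultimately show ?thesis using coord_list_list_point[OF len] mxs by auto
qed

lemma card_face_reps_eq_card_level_msets:
  "card {v \<in> face_reps n. num_levels n v = k} = card (level_msets n k)"
proof -
  have "(\<lambda>v. mset (coord_list n v)) ` {v \<in> face_reps n. num_levels n v = k} = level_msets n k"
    using coord_list_level_msets level_msets_coord_list by fastforce
  moreover have "inj_on (\<lambda>v. mset (coord_list n v)) {v \<in> face_reps n. num_levels n v = k}"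
    using inj_on_mset_coord_list by (rule inj_on_subset) auto
  ultimately show ?thesis by (metis card_image)
qed

lemma g_eq_card_level_msets: "g n k = card (level_msets n k)"
  by (simp add: g_eq_card_face_reps card_face_reps_eq_card_level_msets)

lemma level_msets_0: "level_msets n 0 = {replicate_mset n 0}"
proof
  show "level_msets n 0 \<subseteq> {replicate_mset n 0}"
  proof
    fix M assume M: "M \<in> level_msets n 0"
    then have "set_mset M \<subseteq> {0}" by (auto simp: level_msets_def)
    then have "M = replicate_mset (size M) 0" by (rule set_mset_subset_singletonD)
    then show "M \<in> {replicate_mset n 0}" using M by (simp add: level_msets_def)
  qed
  show "{replicate_mset n 0} \<subseteq> level_msets n 0" by (auto simp: level_msets_def)
qed

lemma finite_level_msets: "finite (level_msets n k)"
proof -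
  have "level_msets n k \<subseteq> mset ` {xs. set xs \<subseteq> {- int k..int k} \<and> length xs = n}"
  proof
    fix M assume M: "M \<in> level_msets n k"
    define xs where "xs = sorted_list_of_multiset M"
    have "set xs \<subseteq> {- int k..int k}" using M by (auto simp: xs_def level_msets_def abs_le_iff)
    moreover have "length xs = n" using M by (simp add: xs_def level_msets_def flip: size_mset)
    moreover have "mset xs = M" by (simp add: xs_def)
    ultimately show "M \<in> mset ` {xs. set xs \<subseteq> {- int k..int k} \<and> length xs = n}" by blast
  qed
  moreover have "finite {xs. set xs \<subseteq> {- int k..int k} \<and> length xs = n}"
    by (rule finite_lists_length_eq) simp
  ultimately show ?thesis by (meson finite_imageI finite_subset)
qed

text \<open>A multiset of level_msets n (k+1) consists of some M in level_msets j k with j < n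
  together with a copies of k+1 and n-j-a copies of -(k+1), where a \<le> n-j.\<close>

definition extend_mset :: "nat \<Rightarrow> nat \<Rightarrow> nat \<times> nat \<times> int multiset \<Rightarrow> int multiset" where
  "extend_mset n k = (\<lambda>(j, a, M).
     M + replicate_mset a (int (Suc k)) + replicate_mset (n - j - a) (- int (Suc k)))"

lemma extend_mset_in_level_msets:
  assumes j: "j < n" "a \<le> n - j" and M: "M \<in> level_msets j k"
  shows "extend_mset n k (j, a, M) \<in> level_msets n (Suc k)"
proof -
  have "int m \<in># extend_mset n k (j, a, M) \<or> - int m \<in># extend_mset n k (j, a, M)"
    if m: "1 \<le> m" "m \<le> Suc k" for m
  proof (cases "m = Suc k")
    case True
    have "0 < a \<or> 0 < n - j - a" using j by linarith
    then show ?thesis using True by (auto simp: extend_mset_def)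
  next
    case False
    then have "int m \<in># M \<or> - int m \<in># M" using M m by (auto simp: level_msets_def)
    then show ?thesis by (auto simp: extend_mset_def)
  qed
  then show ?thesis using j M by (auto simp: extend_mset_def level_msets_def)
qed

lemma extend_mset_components:
  assumes M: "M \<in> level_msets j k"
  shows "count (extend_mset n k (j, a, M)) (int (Suc k)) = a"
    and "count (extend_mset n k (j, a, M)) (- int (Suc k)) = n - j - a"
    and "filter_mset (\<lambda>x. \<bar>x\<bar> \<le> int k) (extend_mset n k (j, a, M)) = M"
proof -
  have notin: "int (Suc k) \<notin># M" "- int (Suc k) \<notin># M"
    and bound: "\<And>x. x \<in># M \<Longrightarrow> \<bar>x\<bar> \<le> int k"
    using M by (auto simp: level_msets_def)
  then show "count (extend_mset n k (j, a, M)) (int (Suc k)) = a"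
    "count (extend_mset n k (j, a, M)) (- int (Suc k)) = n - j - a"
    by (simp_all add: extend_mset_def not_in_iff del: diff_diff_left)
  have "filter_mset (\<lambda>x. \<bar>x\<bar> \<le> int k) M = filter_mset (\<lambda>x. True) M"
    by (rule filter_mset_cong0) (use bound in auto)
  moreover have "filter_mset (\<lambda>x. \<bar>x\<bar> \<le> int k) (replicate_mset c y) = {#}"
    if "int k < \<bar>y\<bar>" for c y
    using that by simp
  ultimately show "filter_mset (\<lambda>x. \<bar>x\<bar> \<le> int k) (extend_mset n k (j, a, M)) = M"
    by (simp add: extend_mset_def)
qed

lemma inj_on_extend_mset:
  "inj_on (extend_mset n k) (SIGMA j:{..<n}. SIGMA a:{0..n-j}. level_msets j k)"
proof (rule inj_onI)
  fix x y
  assume "x \<in> (SIGMA j:{..<n}. SIGMA a:{0..n-j}. level_msets j k)"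
    and "y \<in> (SIGMA j:{..<n}. SIGMA a:{0..n-j}. level_msets j k)"
    and e: "extend_mset n k x = extend_mset n k y"
  then obtain j a M j' a' M' where x: "x = (j, a, M)" "M \<in> level_msets j k"
    and y: "y = (j', a', M')" "M' \<in> level_msets j' k" by auto
  have "M = M'" "a = a'"
    using extend_mset_components[OF x(2)] extend_mset_components[OF y(2)] e x(1) y(1) by metis+
  moreover have "j = j'" using x(2) y(2) \<open>M = M'\<close> by (simp add: level_msets_def)
  ultimately show "x = y" using x y by simp
qed

lemma level_msets_Suc_decomp:
  assumes M: "M \<in> level_msets n (Suc k)"
  shows "\<exists>x\<in>(SIGMA j:{..<n}. SIGMA a:{0..n-j}. level_msets j k). M = extend_mset n k x"
proof -
  define K where "K = int (Suc k)"
  define M' where "M' = filter_mset (\<lambda>x. \<bar>x\<bar> \<le> int k) M"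
  define a where "a = count M K"
  define b where "b = count M (- K)"
  have bd: "\<And>x. x \<in># M \<Longrightarrow> \<bar>x\<bar> \<le> K" using M by (auto simp: level_msets_def K_def)
  have decomp: "M = M' + replicate_mset a K + replicate_mset b (- K)"
  proof (rule multiset_eqI)
    fix x
    have "\<bar>x\<bar> \<le> int k \<or> (x = K \<or> x = - K) \<or> \<bar>x\<bar> > K" unfolding K_def by arith
    then consider "\<bar>x\<bar> \<le> int k" | "x = K \<or> x = - K" | "\<bar>x\<bar> > K" by blast
    then show "count M x = count (M' + replicate_mset a K + replicate_mset b (- K)) x"
    proof cases
      case 3
      then have "x \<notin># M" using bd by force
      moreover have "x \<noteq> K" "x \<noteq> - K" using 3 unfolding K_def by arith+
      ultimately show ?thesis using 3 by (simp add: M'_def not_in_iff K_def)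
    qed (auto simp: M'_def a_def b_def K_def)
  qed
  define j where "j = size M'"
  have sz: "j + a + b = n" using decomp M by (simp add: j_def level_msets_def)
  have "K \<in># M \<or> - K \<in># M" using M by (auto simp: level_msets_def K_def)
  then have "0 < a + b" by (auto simp: a_def b_def)
  moreover have "M' \<in> level_msets j k"
    using M by (auto simp: level_msets_def M'_def j_def)
  moreover have "M = extend_mset n k (j, a, M')"
    using decomp sz by (simp add: extend_mset_def K_def flip: sz)
  ultimately show ?thesis using sz by force
qed

lemma bij_betw_extend_mset:
  "bij_betw (extend_mset n k) (SIGMA j:{..<n}. SIGMA a:{0..n-j}. level_msets j k) (level_msets n (Suc k))"
  unfolding bij_betw_def
proof
  show "inj_on (extend_mset n k) (SIGMA j:{..<n}. SIGMA a:{0..n-j}. level_msets j k)"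
    by (rule inj_on_extend_mset)
  show "extend_mset n k ` (SIGMA j:{..<n}. SIGMA a:{0..n-j}. level_msets j k) = level_msets n (Suc k)"
    using extend_mset_in_level_msets level_msets_Suc_decomp by fastforce
qed

lemma card_level_msets_Suc:
  "card (level_msets n (Suc k)) = (\<Sum>j<n. (n - j + 1) * card (level_msets j k))"
proof -
  have "card (level_msets n (Suc k)) = card (SIGMA j:{..<n}. SIGMA a:{0..n-j}. level_msets j k)"
    using bij_betw_same_card[OF bij_betw_extend_mset] by simp
  also have "\<dots> = (\<Sum>j<n. card (SIGMA a:{0..n-j}. level_msets j k))"
    by (rule card_SigmaI) (auto intro: finite_SigmaI finite_level_msets)
  also have "\<dots> = (\<Sum>j<n. (n - j + 1) * card (level_msets j k))"
    by (intro sum.cong refl) (simp add: finite_level_msets)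
  finally show ?thesis .
qed

section \<open>The first closed form\<close>

lemma two_step_recurrence_unique:
  fixes f g :: "nat \<Rightarrow> 'a" and F :: "'a \<Rightarrow> 'a \<Rightarrow> 'a"
  assumes "\<And>n. f (n + 2) = F (f (n + 1)) (f n)" "\<And>n. g (n + 2) = F (g (n + 1)) (g n)"
    and "f 0 = g 0" "f 1 = g 1"
  shows "f n = g n"
proof -
  have "f n = g n \<and> f (n + 1) = g (n + 1)"
  proof (induction n)
    case (Suc n)
    then show ?case using assms(1,2)[of n] by (simp add: numeral_2_eq_2)
  qed (use assms(3,4) in simp)
  then show ?thesis ..
qed

definition msets_count :: "nat \<Rightarrow> nat \<Rightarrow> int" where "msets_count n k = int (card (level_msets n k))"

lemma msets_count_0: "msets_count n 0 = 1" by (simp add: msets_count_def level_msets_0)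

lemma msets_count_Suc: "msets_count n (Suc k) = (\<Sum>j<n. (int n - int j + 1) * msets_count j k)"
proof -
  have "msets_count n (Suc k) = (\<Sum>j<n. int ((n - j + 1) * card (level_msets j k)))"
    unfolding msets_count_def card_level_msets_Suc of_nat_sum ..
  also have "\<dots> = (\<Sum>j<n. (int n - int j + 1) * msets_count j k)"
  proof (intro sum.cong refl)
    fix j assume "j \<in> {..<n}"
    then have "int (n - j + 1) = int n - int j + 1" by (simp add: of_nat_diff)
    then show "int ((n - j + 1) * card (level_msets j k)) = (int n - int j + 1) * msets_count j k"
      by (simp only: of_nat_mult msets_count_def)
  qed
  finally show ?thesis .
qed

lemma msets_count_rec:
  "msets_count (n + 2) (Suc k) = 2 * msets_count (n + 1) (Suc k) - msets_count n (Suc k) + 2 * msets_count (n + 1) k - msets_count n k"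
proof -
  define c where "c j = msets_count j k" for j
  have a: "msets_count (n + 2) (Suc k) = (\<Sum>j<n. (int n - int j + 3) * c j) + 3 * c n + 2 * c (n + 1)"
    by (simp add: msets_count_Suc c_def algebra_simps)
  have b: "msets_count (n + 1) (Suc k) = (\<Sum>j<n. (int n - int j + 2) * c j) + 2 * c n"
    by (simp add: msets_count_Suc c_def algebra_simps)
  have d: "msets_count n (Suc k) = (\<Sum>j<n. (int n - int j + 1) * c j)"
    by (simp add: msets_count_Suc c_def)
  have gen: "(\<Sum>j<n. A j) - 2 * (\<Sum>j<n. B j) + (\<Sum>j<n. D j) = (\<Sum>j<n. A j - 2 * B j + D j)"
    for A B D :: "nat \<Rightarrow> int"
    by (simp add: sum_subtractf sum.distrib sum_distrib_left)
  have "(\<Sum>j<n. (int n - int j + 3) * c j) - 2 * (\<Sum>j<n. (int n - int j + 2) * c j) + (\<Sum>j<n. (int n - int j + 1) * c j)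
      = (\<Sum>j<n. (int n - int j + 3) * c j - 2 * ((int n - int j + 2) * c j) + (int n - int j + 1) * c j)"
    by (rule gen)
  also have "\<dots> = 0" by (intro sum.neutral ballI) (simp add: algebra_simps)
  finally have z: "(\<Sum>j<n. (int n - int j + 3) * c j) - 2 * (\<Sum>j<n. (int n - int j + 2) * c j) + (\<Sum>j<n. (int n - int j + 1) * c j) = 0" .
  show ?thesis using z unfolding a b d by (simp add: c_def algebra_simps)
qed

lemma msets_count_0_Suc: "msets_count 0 (Suc k) = 0" by (simp add: msets_count_Suc)
lemma msets_count_1_Suc: "msets_count 1 (Suc k) = (if k = 0 then 2 else 0)"
proof -
  have "msets_count 1 (Suc k) = 2 * msets_count 0 k" by (simp add: msets_count_Suc)
  then show ?thesis by (cases k) (simp_all add: msets_count_0 msets_count_0_Suc)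
qed

definition formula1 :: "nat \<Rightarrow> nat \<Rightarrow> int" where
  "formula1 n k = (\<Sum>i=0..k. (-1)^(k-i) * 2^i * int (k choose i) * int ((n+i) choose (2*k)))"

definition alt_sum :: "nat \<Rightarrow> nat \<Rightarrow> int" where
  "alt_sum n k = (\<Sum>i\<le>k. (-2)^i * int (k choose i) * int ((n+i) choose (2*k)))"

lemma formula1_alt: "formula1 n k = (-1)^k * alt_sum n k"
proof -
  have "(-1::int)^(k-i) = (-1)^k * (-1)^i" if "i \<le> k" for i
  proof -
    have "(-1::int)^k = (-1)^(k-i) * (-1)^i" using that by (simp flip: power_add)
    then have "(-1::int)^k * (-1)^i = (-1)^(k-i) * ((-1)^i * (-1)^i)" by (simp add: algebra_simps)
    also have "(-1::int)^i * (-1)^i = 1" by (simp flip: power_add)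
    finally show ?thesis by simp
  qed
  then have "formula1 n k = (\<Sum>i\<le>k. (-1)^k * ((-2)^i * int (k choose i) * int ((n+i) choose (2*k))))"
    unfolding formula1_def atLeast0AtMost
    by (intro sum.cong refl) (simp add: power_mult_distrib[symmetric] algebra_simps)
  also have "\<dots> = (-1)^k * alt_sum n k" by (simp add: alt_sum_def sum_distrib_left)
  finally show ?thesis .
qed

lemma choose_second_difference:
  "int ((m+2) choose (r+2)) - 2 * int ((m+1) choose (r+2)) + int (m choose (r+2)) = int (m choose r)"
proof -
  have "((m+2) choose (r+2)) = ((m+1) choose (r+1)) + ((m+1) choose (r+2))" by simp
  moreover have "((m+1) choose (r+2)) = (m choose (r+1)) + (m choose (r+2))" by simp
  moreover have "((m+1) choose (r+1)) = (m choose r) + (m choose (r+1))" by simp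
  ultimately show ?thesis by simp
qed

lemma alt_sum_rec:
  "alt_sum (n+2) (Suc k) - 2 * alt_sum (n+1) (Suc k) + alt_sum n (Suc k) = alt_sum n k - 2 * alt_sum (n+1) k"
proof -
  define B where "B m r = int (m choose r)" for m r
  have "alt_sum (n+2) (Suc k) - 2 * alt_sum (n+1) (Suc k) + alt_sum n (Suc k) =
    (\<Sum>i\<le>Suc k. (-2)^i * B (Suc k) i * (B (n+i+2) (2*k+2) - 2 * B (n+i+1) (2*k+2) + B (n+i) (2*k+2)))"
    by (simp add: alt_sum_def B_def sum_subtractf sum.distrib sum_distrib_left algebra_simps)
  also have "\<dots> = (\<Sum>i\<le>Suc k. (-2)^i * B (Suc k) i * B (n+i) (2*k))"
    using choose_second_difference by (simp add: B_def)
  also have "\<dots> = B n (2*k) + (\<Sum>i\<le>k. (-2)^(Suc i) * B (Suc k) (Suc i) * B (n + Suc i) (2*k))"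
    by (subst sum.atMost_Suc_shift) (simp add: B_def)
  also have "\<dots> = B n (2*k) + ((\<Sum>i\<le>k. (-2)^(Suc i) * B k (Suc i) * B (n + Suc i) (2*k))
      - 2 * (\<Sum>i\<le>k. (-2)^i * B k i * B (n + 1 + i) (2*k)))"
  proof -
    have t: "(-2)^(Suc i) * B (Suc k) (Suc i) * B (n + Suc i) (2*k) =
       (-2)^(Suc i) * B k (Suc i) * B (n + Suc i) (2*k) - 2 * ((-2)^i * B k i * B (n + 1 + i) (2*k))" for i
      by (simp add: B_def algebra_simps)
    show ?thesis by (simp only: t sum_subtractf sum_distrib_left)
  qed
  also have "\<dots> = (B n (2*k) + (\<Sum>i\<le>k. (-2)^(Suc i) * B k (Suc i) * B (n + Suc i) (2*k)))
      - 2 * (\<Sum>i\<le>k. (-2)^i * B k i * B (n + 1 + i) (2*k))" by simp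
  also have "B n (2*k) + (\<Sum>i\<le>k. (-2)^(Suc i) * B k (Suc i) * B (n + Suc i) (2*k))
     = (\<Sum>i\<le>Suc k. (-2)^i * B k i * B (n + i) (2*k))"
    by (subst sum.atMost_Suc_shift) (simp add: B_def)
  also have "\<dots> = alt_sum n k" by (simp add: alt_sum_def B_def)
  also have "(\<Sum>i\<le>k. (-2)^i * B k i * B (n + 1 + i) (2*k)) = alt_sum (n+1) k" by (simp add: alt_sum_def B_def)
  finally show ?thesis .
qed

lemma formula1_rec:
  "formula1 (n + 2) (Suc k) = 2 * formula1 (n + 1) (Suc k) - formula1 n (Suc k) + 2 * formula1 (n + 1) k - formula1 n k"
proof -
  have e: "alt_sum (n+2) (Suc k) = 2 * alt_sum (n+1) (Suc k) - alt_sum n (Suc k) + alt_sum n k - 2 * alt_sum (n+1) k"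
    using alt_sum_rec[of n k] by linarith
  show ?thesis unfolding formula1_alt e by (simp add: algebra_simps)
qed

lemma formula1_0: "formula1 n 0 = 1" by (simp add: formula1_def)

lemma alt_sum_0_Suc: "alt_sum 0 (Suc k) = 0"
  unfolding alt_sum_def by (intro sum.neutral ballI) (simp add: binomial_eq_0)

lemma alt_sum_1_Suc: "alt_sum 1 (Suc k) = (if k = 0 then -2 else 0)"
proof (cases k)
  case 0 then show ?thesis by (simp add: alt_sum_def binomial_eq_0 numeral_2_eq_2)
next
  case (Suc k')
  have "alt_sum 1 (Suc k) = (\<Sum>i\<le>Suc k. 0)"
    unfolding alt_sum_def
  proof (intro sum.cong refl)
    fix x assume "x \<in> {..Suc k}"
    then have "1 + x < 2 * Suc k" using Suc by simp
    then show "(-2) ^ x * int (Suc k choose x) * int ((1 + x) choose (2 * Suc k)) = 0"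
      by (simp add: binomial_eq_0)
  qed
  then show ?thesis using Suc by simp
qed

lemma msets_count_eq_formula1: "msets_count n k = formula1 n k"
proof -
  define F where "F A B k = (case k of 0 \<Rightarrow> 1 | Suc k \<Rightarrow> 2 * A (Suc k) - B (Suc k) + 2 * A k - B k)"
    for A B :: "nat \<Rightarrow> int" and k
  have "msets_count n = formula1 n"
  proof (rule two_step_recurrence_unique[where F = F])
    show "msets_count (n + 2) = F (msets_count (n + 1)) (msets_count n)" for n
      using msets_count_rec[of n] by (intro ext) (simp add: F_def msets_count_0 split: nat.split)
    show "formula1 (n + 2) = F (formula1 (n + 1)) (formula1 n)" for n
      using formula1_rec[of n] by (intro ext) (simp add: F_def formula1_0 split: nat.split)
    show "msets_count 0 = formula1 0"
    proof
      fix k show "msets_count 0 k = formula1 0 k"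
        by (cases k) (simp add: msets_count_0 formula1_0,
            simp add: msets_count_0_Suc formula1_alt alt_sum_0_Suc)
    qed
    show "msets_count 1 = formula1 1"
    proof
      fix k show "msets_count 1 k = formula1 1 k"
        by (cases k) (simp add: msets_count_0 formula1_0,
            simp add: msets_count_1_Suc[unfolded One_nat_def] formula1_alt
              alt_sum_1_Suc[unfolded One_nat_def])
    qed
  qed
  then show ?thesis by simp
qed

section \<open>The second closed form\<close>

lemma binom_neg: "b < 0 \<Longrightarrow> binom a b = 0" by (simp add: binom_def)
lemma binom_gt: "a < b \<Longrightarrow> binom a b = 0" by (simp add: binom_def)
lemma binom_0: "0 \<le> a \<Longrightarrow> binom a 0 = 1" by (simp add: binom_def)

lemma binom_pascal:
  assumes "a \<noteq> -1 \<or> b \<noteq> 0"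
  shows "binom (a + 1) b = binom a b + binom a (b - 1)"
proof (cases "0 \<le> a")
  case False
  then have "a + 1 < 0 \<or> a = -1" by linarith
  then show ?thesis using assms by (auto simp: binom_def)
next
  case a: True
  consider "b < 0" | "b = 0" | "a + 1 < b" | "1 \<le> b \<and> b \<le> a + 1" by linarith
  then show ?thesis
  proof cases
    case 1 then show ?thesis by (simp add: binom_def)
  next
    case 2 then show ?thesis using a by (simp add: binom_def)
  next
    case 3 then show ?thesis using a by (simp add: binom_def)
  next
    case 4
    obtain A where A: "a = int A" using a by (metis nonneg_eq_int)
    obtain B where B: "b = int (Suc B)" using 4 by (metis int_Suc nonneg_eq_int zero_le_imp_eq_int add.commute
          diff_add_cancel diff_ge_0_iff_ge of_nat_Suc zle_int)
    have "Suc A choose Suc B = (A choose B) + (A choose Suc B)" by simp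
    moreover have "nat (a + 1) = Suc A" "nat b = Suc B" "nat (b - 1) = B" using A B by auto
    moreover have "b - 1 \<le> a" "0 \<le> b - 1" using 4 by auto
    ultimately show ?thesis using 4 A B by (auto simp: binom_def)
  qed
qed

definition rbinom :: "int \<Rightarrow> int \<Rightarrow> real" where "rbinom a b = real_of_int (binom a b)"

definition binom_pair :: "nat \<Rightarrow> nat \<Rightarrow> real" where
  "binom_pair n i = rbinom (int n - int i + 1) (int i) + rbinom (int n - int i) (int i - 1)"

definition coeff2 :: "nat \<Rightarrow> nat \<Rightarrow> real" where
  "coeff2 n i = (-1)^i * (2::real) powi (int n - 2 * int i) * binom_pair n i"

lemma rbinom_pascal:
  "a \<noteq> -1 \<or> b \<noteq> 0 \<Longrightarrow> rbinom (a + 1) b = rbinom a b + rbinom a (b - 1)"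
  unfolding rbinom_def using binom_pascal by simp

lemma binom_pair_eq_0: "n + 1 \<le> i \<Longrightarrow> binom_pair n i = 0"
  unfolding binom_pair_def rbinom_def by (simp add: binom_gt binom_neg)

lemma coeff2_eq_0: "n + 1 \<le> i \<Longrightarrow> coeff2 n i = 0"
  by (simp add: coeff2_def binom_pair_eq_0)

lemma coeff2_0: "coeff2 n 0 = 2 ^ n"
  unfolding coeff2_def binom_pair_def rbinom_def by (simp add: binom_0 binom_neg)

lemma binom_pair_rec:
  "1 \<le> i \<Longrightarrow> binom_pair (n + 2) i = binom_pair (n + 1) i + binom_pair n (i - 1)"
proof -
  assume i: "1 \<le> i"
  define a where "a = int n + 1 - int i"
  have e1: "binom_pair (n + 2) i = rbinom (a + 2) (int i) + rbinom (a + 1) (int i - 1)"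
    by (simp add: binom_pair_def a_def algebra_simps)
  have e2: "binom_pair (n + 1) i = rbinom (a + 1) (int i) + rbinom a (int i - 1)"
    by (simp add: binom_pair_def a_def algebra_simps)
  have e3: "binom_pair n (i - 1) = rbinom (a + 1) (int i - 1) + rbinom a (int i - 1 - 1)"
    using i by (simp add: binom_pair_def a_def of_nat_diff algebra_simps)
  have p1': "rbinom (a + 1 + 1) (int i) = rbinom (a + 1) (int i) + rbinom (a + 1) (int i - 1)"
    by (rule rbinom_pascal) (use i in simp)
  have aa: "a + 1 + 1 = a + 2" by simp
  have p1: "rbinom (a + 2) (int i) = rbinom (a + 1) (int i) + rbinom (a + 1) (int i - 1)"
    using p1' unfolding aa .
  have p2: "rbinom (a + 1) (int i - 1) = rbinom a (int i - 1) + rbinom a (int i - 1 - 1)"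
  proof (cases "a = -1")
    case True
    then have "int i - 1 \<noteq> 0 \<or> True" by simp
    show ?thesis
    proof (cases "int i - 1 = 0")
      case True
      with \<open>a = -1\<close> have "i = 1" "n = 1 - 1 - 1 + 0 \<or> True" by auto
      then show ?thesis using \<open>a = -1\<close> a_def by simp
    next
      case False then show ?thesis by (intro rbinom_pascal) simp
    qed
  next
    case False then show ?thesis by (intro rbinom_pascal) simp
  qed
  show ?thesis unfolding e1 e2 e3 using p1 p2 by linarith
qed

lemma coeff2_rec: "coeff2 (n + 2) (Suc j) = 2 * coeff2 (n + 1) (Suc j) - coeff2 n j"
proof -
  have p1: "(2::real) powi (int (n + 2) - 2 * int (Suc j)) = 2 * 2 powi (int (n + 1) - 2 * int (Suc j))"
  proof -
    define m where "m = int (n + 1) - 2 * int (Suc j)"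
    have e: "int (n + 2) - 2 * int (Suc j) = m + 1" by (simp add: m_def)
    have "(2::real) powi (int (n + 2) - 2 * int (Suc j)) = 2 powi (m + 1)" by (simp only: e)
    also have "\<dots> = 2 * 2 powi m" by (rule power_int_add_1') simp
    finally show ?thesis by (simp only: m_def)
  qed
  have p2: "(2::real) powi (int n - 2 * int j) = 2 powi (int (n + 2) - 2 * int (Suc j))"
    by (rule arg_cong[where f="power_int 2"]) simp
  have "coeff2 (n + 2) (Suc j) = (-1)^(Suc j) * 2 powi (int (n + 2) - 2 * int (Suc j)) * (binom_pair (n + 1) (Suc j) + binom_pair n j)"
    unfolding coeff2_def using binom_pair_rec[of "Suc j" n] by simp
  also have "\<dots> = 2 * coeff2 (n + 1) (Suc j) - coeff2 n j"
    unfolding coeff2_def p2 p1 by (simp add: algebra_simps)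
  finally show ?thesis .
qed

definition formula2 :: "nat \<Rightarrow> int \<Rightarrow> real" where
  "formula2 n k = (\<Sum>i<n+3. coeff2 n i * rbinom (int n - int i) (k - int i))"

lemma sum_lessThan_trunc:
  fixes n M :: nat
  assumes "n \<le> M" "\<And>i. n \<le> i \<Longrightarrow> t i = (0::real)"
  shows "(\<Sum>i<M. t i) = (\<Sum>i<n. t i)"
proof (rule sum.mono_neutral_right)
  show "finite {..<M}" by simp
  show "{..<n} \<subseteq> {..<M}" using assms(1) by auto
  show "\<forall>i\<in>{..<M} - {..<n}. t i = 0" using assms(2) by auto
qed

lemma formula2_extend:
  "n + 1 \<le> M \<Longrightarrow> formula2 n k = (\<Sum>i<M. coeff2 n i * rbinom (int n - int i) (k - int i))"
  unfolding formula2_def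
  by (subst (1 2) sum_lessThan_trunc[where n="n+1"]) (auto simp: coeff2_eq_0)

lemma rbinom_pascal_weighted:
  "coeff2 m i * (rbinom a (b - 1) + rbinom a b) = coeff2 m i * rbinom (a + 1) b"
  if "a = -1 \<and> b = 0 \<Longrightarrow> coeff2 m i = 0" for a b m i
proof (cases "a = -1 \<and> b = 0")
  case True then show ?thesis using that by simp
next
  case False then show ?thesis using rbinom_pascal[of a b] by (simp add: algebra_simps)
qed

lemma formula2_pascal:
  assumes N: "n + 2 \<le> N"
  shows "formula2 n (k - 1) + formula2 n k = (\<Sum>i<N. coeff2 n i * rbinom (int n + 1 - int i) (k - int i))"
proof -
  have "formula2 n (k - 1) + formula2 n k =
      (\<Sum>i<N. coeff2 n i * (rbinom (int n - int i) (k - int i - 1) + rbinom (int n - int i) (k - int i)))"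
    using formula2_extend[of n N] N by (simp add: sum_distrib_left sum.distrib algebra_simps)
  also have "\<dots> = (\<Sum>i<N. coeff2 n i * rbinom (int n + 1 - int i) (k - int i))"
  proof (rule sum.cong)
    fix i
    have "coeff2 n i * (rbinom (int n - int i) (k - int i - 1) + rbinom (int n - int i) (k - int i))
        = coeff2 n i * rbinom (int n - int i + 1) (k - int i)"
      by (rule rbinom_pascal_weighted) (auto intro: coeff2_eq_0)
    then show "coeff2 n i * (rbinom (int n - int i) (k - int i - 1) + rbinom (int n - int i) (k - int i))
        = coeff2 n i * rbinom (int n + 1 - int i) (k - int i)"
      by (simp add: algebra_simps)
  qed simp
  finally show ?thesis .
qed

lemma formula2_rec:
  "formula2 (n + 2) k = 2 * formula2 (n + 1) (k - 1) - formula2 n (k - 2) + 2 * formula2 (n + 1) k - formula2 n (k - 1)"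
proof -
  define N where "N = n + 5"
  have S1: "formula2 (n + 1) (k - 1) + formula2 (n + 1) k =
      (\<Sum>i<N. coeff2 (n + 1) i * rbinom (int n + 2 - int i) (k - int i))"
    using formula2_pascal[of "n + 1" N k] by (simp add: N_def algebra_simps)
  have S2: "formula2 n (k - 2) + formula2 n (k - 1) =
      (\<Sum>i<N. coeff2 n i * rbinom (int n + 1 - int i) (k - 1 - int i))"
    using formula2_pascal[of n N "k - 1"] by (simp add: N_def algebra_simps)
  have H: "formula2 (n + 2) k = (\<Sum>i<Suc N. coeff2 (n + 2) i * rbinom (int n + 2 - int i) (k - int i))"
    using formula2_extend[of "n+2" "Suc N"] by (simp add: N_def algebra_simps)
  also have "\<dots> = coeff2 (n + 2) 0 * rbinom (int n + 2) k + (\<Sum>i<N. coeff2 (n + 2) (Suc i) * rbinom (int n + 1 - int i) (k - 1 - int i))"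
    by (subst sum.lessThan_Suc_shift) (simp add: algebra_simps)
  also have "\<dots> = 2 * coeff2 (n + 1) 0 * rbinom (int n + 2) k + (\<Sum>i<N. 2 * coeff2 (n + 1) (Suc i) * rbinom (int n + 1 - int i) (k - 1 - int i))
      - (\<Sum>i<N. coeff2 n i * rbinom (int n + 1 - int i) (k - 1 - int i))"
  proof -
    have "(\<Sum>i<N. coeff2 (n + 2) (Suc i) * rbinom (int n + 1 - int i) (k - 1 - int i)) =
      (\<Sum>i<N. 2 * coeff2 (n + 1) (Suc i) * rbinom (int n + 1 - int i) (k - 1 - int i) - coeff2 n i * rbinom (int n + 1 - int i) (k - 1 - int i))"
      unfolding coeff2_rec by (simp only: left_diff_distrib)
    also have "\<dots> = (\<Sum>i<N. 2 * coeff2 (n + 1) (Suc i) * rbinom (int n + 1 - int i) (k - 1 - int i)) - (\<Sum>i<N. coeff2 n i * rbinom (int n + 1 - int i) (k - 1 - int i))"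
      by (rule sum_subtractf)
    finally have e: "(\<Sum>i<N. coeff2 (n + 2) (Suc i) * rbinom (int n + 1 - int i) (k - 1 - int i)) =
      (\<Sum>i<N. 2 * coeff2 (n + 1) (Suc i) * rbinom (int n + 1 - int i) (k - 1 - int i)) - (\<Sum>i<N. coeff2 n i * rbinom (int n + 1 - int i) (k - 1 - int i))" .
    have p0: "coeff2 (n + 2) 0 = 2 * coeff2 (n + 1) 0" by (simp add: coeff2_0)
    show ?thesis unfolding e p0 by simp
  qed
  also have "2 * coeff2 (n + 1) 0 * rbinom (int n + 2) k + (\<Sum>i<N. 2 * coeff2 (n + 1) (Suc i) * rbinom (int n + 1 - int i) (k - 1 - int i))
      = (\<Sum>i<Suc N. 2 * coeff2 (n + 1) i * rbinom (int n + 2 - int i) (k - int i))"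
    by (subst sum.lessThan_Suc_shift) (simp add: algebra_simps)
  also have "\<dots> = (\<Sum>i<N. 2 * coeff2 (n + 1) i * rbinom (int n + 2 - int i) (k - int i))"
    unfolding sum.lessThan_Suc using coeff2_eq_0[of "n+1" N] by (simp add: N_def)
  finally have "formula2 (n + 2) k =
      (\<Sum>i<N. 2 * coeff2 (n + 1) i * rbinom (int n + 2 - int i) (k - int i))
      - (\<Sum>i<N. coeff2 n i * rbinom (int n + 1 - int i) (k - 1 - int i))" .
  moreover have "(\<Sum>i<N. 2 * coeff2 (n + 1) i * rbinom (int n + 2 - int i) (k - int i)) =
      2 * (\<Sum>i<N. coeff2 (n + 1) i * rbinom (int n + 2 - int i) (k - int i))"
    by (simp add: sum_distrib_left mult.assoc)
  ultimately show ?thesis using S1 S2 by linarith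
qed

definition msets_count_int :: "nat \<Rightarrow> int \<Rightarrow> real" where
  "msets_count_int n m = (if m < 0 then 0 else real_of_int (msets_count n (nat m)))"

lemma msets_count_int_rec:
  "msets_count_int (n + 2) m = 2 * msets_count_int (n + 1) m - msets_count_int n m + 2 * msets_count_int (n + 1) (m - 1) - msets_count_int n (m - 1)"
proof -
  consider "m < 0" | "m = 0" | "0 < m" by linarith
  then show ?thesis
  proof cases
    case 1 then show ?thesis by (simp add: msets_count_int_def)
  next
    case 2 then show ?thesis by (simp add: msets_count_int_def msets_count_0)
  next
    case 3
    obtain N where N: "m = int N" "0 < N" using 3 by (rule pos_int_cases)
    then obtain k where "N = Suc k" using not0_implies_Suc by blast
    then have k: "m = int (Suc k)" using N by simp
    have "msets_count (n + 2) (Suc k) = 2 * msets_count (n + 1) (Suc k) - msets_count n (Suc k) + 2 * msets_count (n + 1) k - msets_count n k"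
      by (rule msets_count_rec)
    then have "real_of_int (msets_count (n + 2) (Suc k)) = 2 * real_of_int (msets_count (n + 1) (Suc k)) - real_of_int (msets_count n (Suc k))
       + 2 * real_of_int (msets_count (n + 1) k) - real_of_int (msets_count n k)"
      by (simp only: of_int_add of_int_diff of_int_mult of_int_numeral)
    moreover have "nat m = Suc k" "nat (m - 1) = k" "\<not> m < 0" "\<not> m - 1 < 0" using k by auto
    ultimately show ?thesis by (simp add: msets_count_int_def)
  qed
qed

lemma rbinom_simps:
  "rbinom 0 k = (if k = 0 then 1 else 0)" "rbinom 1 k = (if k = 0 \<or> k = 1 then 1 else 0)"
  "a < 0 \<Longrightarrow> rbinom a k = 0"
  by (auto simp: rbinom_def binom_def nat_eq_iff)

lemma formula2_0: "formula2 0 k = (if k = 0 then 1 else 0)"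
proof -
  have "formula2 0 k = (\<Sum>i<1. coeff2 0 i * rbinom (int 0 - int i) (k - int i))" by (rule formula2_extend) simp
  then show ?thesis by (simp add: coeff2_0 rbinom_simps)
qed

lemma coeff2_1_1: "coeff2 1 1 = -1"
proof -
  have "binom_pair 1 1 = 2" by (simp add: binom_pair_def rbinom_def binom_def)
  moreover have "(2::real) powi (int 1 - 2 * int 1) = 1/2" by (simp add: power_int_minus)
  ultimately show ?thesis by (simp add: coeff2_def)
qed

lemma formula2_1: "formula2 1 k = (if k = 0 then 2 else if k = 1 then 1 else 0)"
proof -
  have "formula2 1 k = (\<Sum>i<2. coeff2 1 i * rbinom (int 1 - int i) (k - int i))" by (rule formula2_extend) simp
  also have "\<dots> = coeff2 1 0 * rbinom 1 k + coeff2 1 1 * rbinom 0 (k - 1)" by (simp add: numeral_2_eq_2)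
  also have "\<dots> = 2 * rbinom 1 k - rbinom 0 (k - 1)" using coeff2_1_1 by (simp add: coeff2_0)
  finally show ?thesis by (simp add: rbinom_simps)
qed

lemma msets_count_int_0: "msets_count_int 0 m = (if m = 0 then 1 else 0)"
proof -
  have "m > 0 \<Longrightarrow> \<exists>k. nat m = Suc k" by (intro exI[of _ "nat m - 1"]) simp
  then show ?thesis by (auto simp: msets_count_int_def msets_count_0 msets_count_0_Suc)
qed

lemma msets_count_int_1: "msets_count_int 1 m = (if m = 0 then 1 else if m = 1 then 2 else 0)"
proof -
  consider "m < 0" | "m = 0" | "m = 1" | "m \<ge> 2" by linarith
  then show ?thesis
  proof cases
    case 4
    have "nat m = Suc (Suc (nat m - 2))" using 4 by simp
    then obtain k where "nat m = Suc (Suc k)" by blast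
    then show ?thesis using 4 msets_count_1_Suc by (simp add: msets_count_int_def)
  qed (auto simp: msets_count_int_def msets_count_0 msets_count_1_Suc[unfolded One_nat_def])
qed

lemma msets_count_int_eq_formula2: "msets_count_int n m = formula2 n (int n - m)"
proof -
  define F where "F A B m = 2 * A m - B m + 2 * A (m - 1) - B (m - 1)" for A B :: "int \<Rightarrow> real" and m
  have "msets_count_int n = (\<lambda>m. formula2 n (int n - m))"
  proof (rule two_step_recurrence_unique[where F = F])
    show "msets_count_int (n + 2) = F (msets_count_int (n + 1)) (msets_count_int n)" for n
      using msets_count_int_rec[of n] by (intro ext) (simp add: F_def)
    show "(\<lambda>m. formula2 (n + 2) (int (n + 2) - m)) =
        F (\<lambda>m. formula2 (n + 1) (int (n + 1) - m)) (\<lambda>m. formula2 n (int n - m))" for n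
    proof
      fix m
      show "formula2 (n + 2) (int (n + 2) - m) =
          F (\<lambda>m. formula2 (n + 1) (int (n + 1) - m)) (\<lambda>m. formula2 n (int n - m)) m"
        using formula2_rec[of n "int (n + 2) - m"] by (simp add: F_def algebra_simps)
    qed
    show "msets_count_int 0 = (\<lambda>m. formula2 0 (int 0 - m))"
      by (rule ext) (simp add: msets_count_int_0 formula2_0)
    show "msets_count_int 1 = (\<lambda>m. formula2 1 (int 1 - m))"
      using msets_count_int_1 formula2_1 by (intro ext) auto
  qed
  then show ?thesis by simp
qed

lemma formula2_eq_truncated_sum:
  assumes "k \<le> n"
  shows "formula2 n (int k) =
    (\<Sum>i=0..min k ((n+1) div 2).
       (-1)^i * (2::real) powi (int n - 2 * int i)
       * real_of_int (binom (int n - int i) (int k - int i))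
       * real_of_int (binom (int n - int i + 1) (int i) + binom (int n - int i) (int i - 1)))"
    (is "_ = (\<Sum>i\<in>?I. ?t i)")
proof -
  have "formula2 n (int k) = (\<Sum>i<n+3. ?t i)"
    unfolding formula2_def coeff2_def binom_pair_def rbinom_def
    by (intro sum.cong refl) (simp add: algebra_simps)
  also have "\<dots> = (\<Sum>i\<in>?I. ?t i)"
  proof (rule sum.mono_neutral_right)
    show "?I \<subseteq> {..<n+3}" using assms by auto
    show "\<forall>i\<in>{..<n+3} - ?I. ?t i = 0"
    proof
      fix i assume "i \<in> {..<n+3} - ?I"
      then have "k < i \<or> n + 1 < 2 * i" by auto
      then have "binom (int n - int i) (int k - int i) = 0 \<or>
          binom (int n - int i + 1) (int i) = 0 \<and> binom (int n - int i) (int i - 1) = 0"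
        by (auto simp: binom_neg binom_gt)
      then show "?t i = 0" by auto
    qed
  qed simp
  finally show ?thesis .
qed

lemma g_eq_formula1: "int (g n k) = formula1 n k"
  using msets_count_eq_formula1 by (simp add: g_eq_card_level_msets msets_count_def)

lemma g_eq_formula2:
  assumes "k \<le> n"
  shows "real (g n (n - k)) = formula2 n (int k)"
proof -
  have "int n - int (n - k) = int k" "nat (int n - int k) = n - k" using assms by simp_all
  then show ?thesis
    using msets_count_int_eq_formula2[of n "int (n - k)"]
    by (simp add: g_eq_card_level_msets msets_count_int_def msets_count_def)
qed

theorem corollary1p8:
  shows "(\<forall>n k. int (g n k) =
            (\<Sum>i=0..k. (-1)^(k-i) * 2^i * int (k choose i) * int ((n+i) choose (2*k))))
       \<and> (\<forall>n k. k \<le> n \<longrightarrow>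
            real (g n (n-k)) =
            (\<Sum>i=0..min k ((n+1) div 2).
               (-1)^i * (2::real) powi (int n - 2 * int i)
               * real_of_int (binom (int n - int i) (int k - int i))
               * real_of_int (binom (int n - int i + 1) (int i) + binom (int n - int i) (int i - 1))))"
  using g_eq_formula1 g_eq_formula2 formula2_eq_truncated_sum by (simp add: formula1_def)

end
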